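(* Let $\xi$ be an American option and let $\mathcal{Z}^{\mathrm{bd}}_0$ be given by the construction in the context. Then \[ \mathcal{Z}^{\mathrm{bd}}_0=\{x\in\mathbb{R}^d:\exists(y,\chi)\in\Phi^{\mathrm{bg}}(\xi),\ x=y_0\}, \] and for each $j=1,\ldots,d$ the bid price satisfies $\pi^{\mathrm{bg}}_j(\xi)=\max\{-x\in\mathbb{R}: xe^j\in\mathcal{Z}^{\mathrm{bd}}_0\}$ (the maximum being attained). Moreover, there exists $(y,\chi)\in\Phi^{\mathrm{bg}}(\xi)$ with $\pi^{\mathrm{bg}}_j(\xi)e^j=-y_0$.
   Context: Finite filtered probability space $(\Omega,\mathcal{F},\mathbb{P};(\mathcal{F}_t)_{t=0}^T)$, $\mathcal{F}_0$ trivial, $\mathcal{F}_T=2^\Omega$, $\mathbb{P}(\{\omega\})>0$. $\Omega_t$: atoms (nodes) of $\mathcal{F}_t$; $\mathrm{succ}\,\mu=\{\nu\in\Omega_{t+1}:\nu\subseteq\mu\}$. $\mathcal{L}_t$: $\mathcal{F}_t$-measurable $\mathbb{R}^d$-valued random variables. $d$ assets, $\mathcal{F}_t$-measurable exchange rates $\pi^{jk}_t>0$, $\pi^{jj}_t=1$. $\mathcal{K}^\mu_t$: convex cone generated by $e^1,\ldots,e^d$ and $\pi^{jk}_t(\mu)e^j-e^k$; $\mathcal{K}_t=\{x\in\mathcal{L}_t:x(\mu)\in\mathcal{K}^\mu_t\ \forall\mu\}$. Deferred solvency cone $\mathcal{Q}_t$: $z\in\mathcal{L}_t$ for which there exist $y_{t+1},\ldots,y_{T+1}$,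 $y_s\in\mathcal{L}_{s-1}$, $y_{T+1}=0$, with $z-y_{t+1}\in\mathcal{K}_t$, $y_s-y_{s+1}\in\mathcal{K}_s$ ($s>t$); $\mathcal{Q}^\mu_t=\{z(\mu):z\in\mathcal{Q}_t\}$. Trading strategies $\Phi$: $y=(y_t)_{t=0}^{T+1}$, $y_0\in\mathbb{R}^d$, $y_t\in\mathcal{L}_{t-1}$, $y_{T+1}=0$. Mixed stopping times $\mathcal{X}$: adapted $[0,1]$-valued $\chi$ with $\sum_{t=0}^T\chi_t=1$. American option: adapted $\mathbb{R}^d$-valued $\xi$. $\Phi^{\mathrm{bg}}(\xi)$: set of pairs $(y,\chi)\in\Phi\times\mathcal{X}$ with $y_t+\chi_t\xi_t-y_{t+1}\in\mathcal{K}_t$ for each $t=0,\ldots,T$. Bid price: $\pi^{\mathrm{bg}}_j(\xi)=\sup\{-x\in\mathbb{R}:\exists(y,\chi)\in\Phi^{\mathrm{bg}}(\xi),\ xe^j=y_0\}$. Construction (nodewise): $\mathcal{U}^{\mathrm{bd}\mu}_t=-\xi_t(\mu)+\mathcal{Q}^\mu_t$; at $T$: $\mathcal{Z}^{\mathrm{bd}\mu}_T=\mathcal{V}^{\mathrm{bd}\mu}_T=\mathcal{W}^{\mathrm{bd}\mu}_T=\mathcal{U}^{\mathrm{bd}\mu}_T$; for $t<T$: $\mathcal{W}^{\mathrm{bd}\mu}_t=\bigcap_{\nu\in\mathrm{succ}\,\mu}\mathcal{Z}^{\mathrm{bd}\nu}_{t+1}$, $\mathcal{V}^{\mathrm{bd}\mu}_t=\mathcal{W}^{\mathrm{bd}\mu}_t+\mathcal{Q}^\mu_t$,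 $\mathcal{Z}^{\mathrm{bd}\mu}_t=\mathrm{conv}\{\mathcal{U}^{\mathrm{bd}\mu}_t,\mathcal{V}^{\mathrm{bd}\mu}_t\}$. $\mathcal{Z}^{\mathrm{bd}}_0$ is the set at the root node. Standing assumption: no arbitrage (no $y\in\Phi$ with $y_0=0$, $y_t-y_{t+1}\in\mathcal{K}_t$ for $t<T$ and $y_T-x\in\mathcal{K}_T$ for a nonzero componentwise non-negative $x\in\mathcal{L}_T$). *)

theory Defs
  imports "HOL-Analysis.Analysis" "HOL-Library.Disjoint_Sets"
begin

text \<open>Finite filtered probability space: the sample space is a finite set Omega,
  the filtration F t is given by its atoms (a partition of Omega), t = 0..T.
  Vectors in R^d are modelled as real^'d with 'd a finite index type;
  e^j is axis j 1.  Exchange rates: rate t w j k.\<close>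

definition measurable_at :: "'w set set \<Rightarrow> ('w \<Rightarrow> 'a) \<Rightarrow> bool" where
  "measurable_at A X \<longleftrightarrow> (\<forall>\<mu>\<in>A. \<forall>\<omega>\<in>\<mu>. \<forall>\<omega>'\<in>\<mu>. X \<omega> = X \<omega>')"

definition nodeval :: "('w \<Rightarrow> 'a) \<Rightarrow> 'w set \<Rightarrow> 'a" where
  "nodeval X \<mu> = X (SOME \<omega>. \<omega> \<in> \<mu>)"

definition succ_nodes :: "(nat \<Rightarrow> 'w set set) \<Rightarrow> nat \<Rightarrow> 'w set \<Rightarrow> 'w set set" where
  "succ_nodes F t \<mu> = {\<nu> \<in> F (Suc t). \<nu> \<subseteq> \<mu>}"

definition Kcone :: "(nat \<Rightarrow> 'w \<Rightarrow> 'd \<Rightarrow> 'd \<Rightarrow> real) \<Rightarrow> nat \<Rightarrow> 'w \<Rightarrow> (real^'d::finite) set" where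
  "Kcone rate t \<omega> = convex_cone hull
     ({axis j 1 | j. True} \<union> {rate t \<omega> j k *\<^sub>R axis j 1 - axis k 1 | j k. True})"

definition Qset :: "'w set \<Rightarrow> (nat \<Rightarrow> 'w set set) \<Rightarrow> nat \<Rightarrow> (nat \<Rightarrow> 'w \<Rightarrow> 'd \<Rightarrow> 'd \<Rightarrow> real)
    \<Rightarrow> nat \<Rightarrow> ('w \<Rightarrow> real^'d::finite) set" where
  "Qset Omega F T rate t = {z. measurable_at (F t) z \<and>
     (\<exists>y :: nat \<Rightarrow> 'w \<Rightarrow> real^'d.
        (\<forall>s\<in>{t+1..T+1}. measurable_at (F (s - 1)) (y s)) \<and>
        (\<forall>\<omega>\<in>Omega. y (T+1) \<omega> = 0) \<and>
        (\<forall>\<omega>\<in>Omega. z \<omega> - y (t+1) \<omega> \<in> Kcone rate t \<omega>) \<and>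
        (\<forall>s\<in>{t+1..T}. \<forall>\<omega>\<in>Omega. y s \<omega> - y (s+1) \<omega> \<in> Kcone rate s \<omega>))}"

definition Qnode :: "'w set \<Rightarrow> (nat \<Rightarrow> 'w set set) \<Rightarrow> nat \<Rightarrow> (nat \<Rightarrow> 'w \<Rightarrow> 'd \<Rightarrow> 'd \<Rightarrow> real)
    \<Rightarrow> nat \<Rightarrow> 'w set \<Rightarrow> (real^'d::finite) set" where
  "Qnode Omega F T rate t \<mu> = {x. \<exists>z\<in>Qset Omega F T rate t. \<forall>\<omega>\<in>\<mu>. z \<omega> = x}"

definition Unode :: "'w set \<Rightarrow> (nat \<Rightarrow> 'w set set) \<Rightarrow> nat \<Rightarrow> (nat \<Rightarrow> 'w \<Rightarrow> 'd \<Rightarrow> 'd \<Rightarrow> real)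
    \<Rightarrow> (nat \<Rightarrow> 'w \<Rightarrow> real^'d::finite) \<Rightarrow> nat \<Rightarrow> 'w set \<Rightarrow> (real^'d) set" where
  "Unode Omega F T rate xi t \<mu> = (\<lambda>q. - nodeval (xi t) \<mu> + q) ` Qnode Omega F T rate t \<mu>"

text \<open>Zrec n mu is Z^{bd,mu}_{T-n} (backward recursion from time T).\<close>
primrec Zrec :: "'w set \<Rightarrow> (nat \<Rightarrow> 'w set set) \<Rightarrow> nat \<Rightarrow> (nat \<Rightarrow> 'w \<Rightarrow> 'd \<Rightarrow> 'd \<Rightarrow> real)
    \<Rightarrow> (nat \<Rightarrow> 'w \<Rightarrow> real^'d::finite) \<Rightarrow> nat \<Rightarrow> 'w set \<Rightarrow> (real^'d) set" where
  "Zrec Omega F T rate xi 0 \<mu> = Unode Omega F T rate xi T \<mu>"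
| "Zrec Omega F T rate xi (Suc n) \<mu> =
     (let t = T - Suc n;
          W = (\<Inter>\<nu>\<in>succ_nodes F t \<mu>. Zrec Omega F T rate xi n \<nu>);
          V = {w + q | w q. w \<in> W \<and> q \<in> Qnode Omega F T rate t \<mu>}
      in convex hull (Unode Omega F T rate xi t \<mu> \<union> V))"

definition Z0 :: "'w set \<Rightarrow> (nat \<Rightarrow> 'w set set) \<Rightarrow> nat \<Rightarrow> (nat \<Rightarrow> 'w \<Rightarrow> 'd \<Rightarrow> 'd \<Rightarrow> real)
    \<Rightarrow> (nat \<Rightarrow> 'w \<Rightarrow> real^'d::finite) \<Rightarrow> (real^'d) set" where
  "Z0 Omega F T rate xi = Zrec Omega F T rate xi T Omega"

definition is_strategy :: "'w set \<Rightarrow> (nat \<Rightarrow> 'w set set) \<Rightarrow> nat \<Rightarrow> (nat \<Rightarrow> 'w \<Rightarrow> real^'d::finite) \<Rightarrow> bool" where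
  "is_strategy Omega F T y \<longleftrightarrow> measurable_at (F 0) (y 0) \<and>
     (\<forall>t\<in>{1..T+1}. measurable_at (F (t - 1)) (y t)) \<and> (\<forall>\<omega>\<in>Omega. y (T+1) \<omega> = 0)"

definition init :: "'w set \<Rightarrow> (nat \<Rightarrow> 'w \<Rightarrow> 'a) \<Rightarrow> 'a" where
  "init Omega y = y 0 (SOME \<omega>. \<omega> \<in> Omega)"

definition is_mixed_stopping_time :: "'w set \<Rightarrow> (nat \<Rightarrow> 'w set set) \<Rightarrow> nat \<Rightarrow> (nat \<Rightarrow> 'w \<Rightarrow> real) \<Rightarrow> bool" where
  "is_mixed_stopping_time Omega F T ch \<longleftrightarrow>
     (\<forall>t\<le>T. measurable_at (F t) (ch t) \<and> (\<forall>\<omega>\<in>Omega. 0 \<le> ch t \<omega> \<and> ch t \<omega> \<le> 1)) \<and>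
     (\<forall>\<omega>\<in>Omega. (\<Sum>t\<le>T. ch t \<omega>) = 1)"

definition Phi_bg :: "'w set \<Rightarrow> (nat \<Rightarrow> 'w set set) \<Rightarrow> nat \<Rightarrow> (nat \<Rightarrow> 'w \<Rightarrow> 'd \<Rightarrow> 'd \<Rightarrow> real)
    \<Rightarrow> (nat \<Rightarrow> 'w \<Rightarrow> real^'d::finite) \<Rightarrow> ((nat \<Rightarrow> 'w \<Rightarrow> real^'d) \<times> (nat \<Rightarrow> 'w \<Rightarrow> real)) set" where
  "Phi_bg Omega F T rate xi = {(y, ch). is_strategy Omega F T y \<and> is_mixed_stopping_time Omega F T ch \<and>
     (\<forall>t\<le>T. \<forall>\<omega>\<in>Omega. y t \<omega> + ch t \<omega> *\<^sub>R xi t \<omega> - y (t+1) \<omega> \<in> Kcone rate t \<omega>)}"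

definition bid_price :: "'w set \<Rightarrow> (nat \<Rightarrow> 'w set set) \<Rightarrow> nat \<Rightarrow> (nat \<Rightarrow> 'w \<Rightarrow> 'd \<Rightarrow> 'd \<Rightarrow> real)
    \<Rightarrow> (nat \<Rightarrow> 'w \<Rightarrow> real^'d::finite) \<Rightarrow> 'd \<Rightarrow> real" where
  "bid_price Omega F T rate xi j =
     Sup {- x | x. \<exists>(y, ch)\<in>Phi_bg Omega F T rate xi. x *\<^sub>R axis j 1 = init Omega y}"

definition no_arbitrage :: "'w set \<Rightarrow> (nat \<Rightarrow> 'w set set) \<Rightarrow> nat \<Rightarrow> (nat \<Rightarrow> 'w \<Rightarrow> 'd \<Rightarrow> 'd \<Rightarrow> real)
    \<Rightarrow> 'd::finite itself \<Rightarrow> bool" where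
  "no_arbitrage Omega F T rate _ \<longleftrightarrow> \<not> (\<exists>(y :: nat \<Rightarrow> 'w \<Rightarrow> real^'d) (x :: 'w \<Rightarrow> real^'d).
     is_strategy Omega F T y \<and> init Omega y = 0 \<and>
     (\<forall>t<T. \<forall>\<omega>\<in>Omega. y t \<omega> - y (t+1) \<omega> \<in> Kcone rate t \<omega>) \<and>
     measurable_at (F T) x \<and> (\<forall>\<omega>\<in>Omega. \<forall>i. 0 \<le> x \<omega> $ i) \<and> (\<exists>\<omega>\<in>Omega. x \<omega> \<noteq> 0) \<and>
     (\<forall>\<omega>\<in>Omega. y T \<omega> - x \<omega> \<in> Kcone rate T \<omega>))"

end

theory Submission
  imports Defs
begin

text \<open>Homogenise the construction: at a node \<open>\<mu>\<close> consider the cone of pairs \<open>(v, a)\<close> such that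
  a buyer's hedge can be started at \<open>\<mu>\<close> from the position \<open>v\<close> while the mass \<open>a\<close> of the mixed
  stopping time is still to be exercised. These cones obey a backward recursion (intersect over
  the successors, then add trading and exercising), so they are finitely generated and hence
  closed. Their slice \<open>a = 0\<close> is the deferred solvency cone and their slice \<open>a = 1\<close> is the set
  built by the construction: the convex hull taken there is exactly dehomogenisation. At the root
  this identifies \<open>Z0\<close> with the initial positions of hedges. No arbitrage says that \<open>(- e\<^sup>j, 0)\<close>
  lies outside the closed root cone; by homogeneity \<open>{- x | x e\<^sup>j \<in> Z0}\<close> is then bounded above,
  and being closed it contains its supremum, the bid price.\<close>

section \<open>Finitely generated cones\<close>

lemma convex_cone_sum:
  assumes "convex_cone S" "\<And>i. i \<in> I \<Longrightarrow> f i \<in> S"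
  shows "sum f I \<in> S"
proof (cases "finite I")
  case True
  then show ?thesis using assms(2)
    by (induction I rule: finite_induct)
      (auto intro: convex_cone_add[OF assms(1)] convex_cone_contains_0[OF assms(1)])
qed (simp add: convex_cone_contains_0[OF assms(1)])

lemma convex_cone_hull_finite:
  fixes G :: "'a::real_vector set"
  assumes "finite G"
  shows "convex_cone hull G = {\<Sum>g\<in>G. c g *\<^sub>R g | c. \<forall>g\<in>G. 0 \<le> c g}" (is "_ = ?R")
proof
  show "convex_cone hull G \<subseteq> ?R"
  proof (rule hull_minimal)
    show "G \<subseteq> ?R"
    proof
      fix x assume x: "x \<in> G"
      have "(\<Sum>g\<in>G. (if g = x then 1 else 0) *\<^sub>R g) = x"
        using assms x by (simp add: if_distrib[of "\<lambda>c. c *\<^sub>R _"] sum.delta cong: if_cong)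
      then show "x \<in> ?R" by (intro CollectI exI[of _ "\<lambda>g. if g = x then 1 else 0"]) auto
    qed
    show "convex_cone ?R"
      unfolding convex_cone_iff
    proof (intro conjI ballI allI impI)
      show "0 \<in> ?R" by (intro CollectI exI[of _ "\<lambda>_. 0"]) simp
    next
      fix x y assume "x \<in> ?R" "y \<in> ?R"
      then obtain c d where "x = (\<Sum>g\<in>G. c g *\<^sub>R g)" "y = (\<Sum>g\<in>G. d g *\<^sub>R g)"
        "\<forall>g\<in>G. 0 \<le> c g" "\<forall>g\<in>G. 0 \<le> d g" by blast
      then show "x + y \<in> ?R"
        by (intro CollectI exI[of _ "\<lambda>g. c g + d g"]) (auto simp: scaleR_add_left sum.distrib)
    next
      fix x and a :: real assume "x \<in> ?R" "0 \<le> a"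
      then obtain c where "x = (\<Sum>g\<in>G. c g *\<^sub>R g)" "\<forall>g\<in>G. 0 \<le> c g" by blast
      with \<open>0 \<le> a\<close> show "a *\<^sub>R x \<in> ?R"
        by (intro CollectI exI[of _ "\<lambda>g. a * c g"]) (auto simp: scaleR_sum_right)
    qed
  qed
  show "?R \<subseteq> convex_cone hull G"
  proof
    fix x assume "x \<in> ?R"
    then obtain c where "x = (\<Sum>g\<in>G. c g *\<^sub>R g)" "\<forall>g\<in>G. 0 \<le> c g" by blast
    then show "x \<in> convex_cone hull G"
      by (simp add: convex_cone_sum[OF convex_cone_convex_cone_hull] convex_cone_hull_mul hull_inc)
  qed
qed

lemma convex_cone_hull_singleton: "convex_cone hull {v} = {a *\<^sub>R v | a. 0 \<le> a}"
  using convex_cone_hull_finite[of "{v}"] by auto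

definition finitely_generated_cone :: "'a::real_vector set \<Rightarrow> bool" where
  "finitely_generated_cone C \<longleftrightarrow> (\<exists>G. finite G \<and> C = convex_cone hull G)"

lemma finitely_generated_cone_hull: "finite G \<Longrightarrow> finitely_generated_cone (convex_cone hull G)"
  unfolding finitely_generated_cone_def by blast

lemma finitely_generated_cone_imp_convex_cone: "finitely_generated_cone C \<Longrightarrow> convex_cone C"
  unfolding finitely_generated_cone_def using convex_cone_convex_cone_hull by blast

lemma finitely_generated_cone_imp_closed:
  fixes C :: "'a::euclidean_space set"
  shows "finitely_generated_cone C \<Longrightarrow> closed C"
  unfolding finitely_generated_cone_def using closed_convex_cone_hull by blast

lemma finitely_generated_cone_linear_image:
  "finitely_generated_cone C \<Longrightarrow> linear f \<Longrightarrow> finitely_generated_cone (f ` C)"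
  unfolding finitely_generated_cone_def by (metis convex_cone_hull_linear_image finite_imageI)

lemma finitely_generated_cone_sums:
  assumes "finitely_generated_cone A" "finitely_generated_cone B"
  shows "finitely_generated_cone {x + y | x y. x \<in> A \<and> y \<in> B}"
proof -
  obtain G H where "finite G" "A = convex_cone hull G" "finite H" "B = convex_cone hull H"
    using assms unfolding finitely_generated_cone_def by blast
  then have "{x + y | x y. x \<in> A \<and> y \<in> B} = convex_cone hull (G \<union> H)"
    by (auto simp: convex_cone_hull_Un)
  with \<open>finite G\<close> \<open>finite H\<close> show ?thesis
    by (simp add: finitely_generated_cone_hull)
qed

lemma fourier_motzkin_pairing:
  fixes a :: "'a::real_inner" and c :: "'a \<Rightarrow> real"
  assumes "finite P" "finite N" "s \<noteq> 0"
    and s: "(\<Sum>g\<in>P. c g * (a \<bullet> g)) = s" "(\<Sum>h\<in>N. c h * (a \<bullet> h)) = - s"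
  shows "(\<Sum>(g, h)\<in>P \<times> N. (c g * c h / s) *\<^sub>R ((a \<bullet> g) *\<^sub>R h - (a \<bullet> h) *\<^sub>R g))
    = (\<Sum>g\<in>P. c g *\<^sub>R g) + (\<Sum>h\<in>N. c h *\<^sub>R h)"
proof -
  have "(\<Sum>(g, h)\<in>P \<times> N. (c g * c h / s) *\<^sub>R ((a \<bullet> g) *\<^sub>R h - (a \<bullet> h) *\<^sub>R g))
      = (\<Sum>g\<in>P. \<Sum>h\<in>N. (c g * (a \<bullet> g) * c h / s) *\<^sub>R h)
        - (\<Sum>g\<in>P. \<Sum>h\<in>N. (c h * (a \<bullet> h) * c g / s) *\<^sub>R g)"
    by (simp add: sum.cartesian_product[symmetric] sum_subtractf scaleR_diff_right mult_ac)
  also have "(\<Sum>g\<in>P. \<Sum>h\<in>N. (c g * (a \<bullet> g) * c h / s) *\<^sub>R h) = (\<Sum>h\<in>N. (s * c h / s) *\<^sub>R h)"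
    by (subst sum.swap) (simp add: s(1) flip: scaleR_sum_left sum_divide_distrib sum_distrib_right)
  also have "(\<Sum>g\<in>P. \<Sum>h\<in>N. (c h * (a \<bullet> h) * c g / s) *\<^sub>R g) = (\<Sum>g\<in>P. (- s * c g / s) *\<^sub>R g)"
    by (simp add: s(2) flip: scaleR_sum_left sum_divide_distrib sum_distrib_right)
  finally show ?thesis
    using \<open>s \<noteq> 0\<close> by (simp add: sum_negf)
qed

lemma convex_cone_hull_Int_hyperplane:
  fixes G :: "'a::real_inner set"
  assumes "finite G"
  shows "convex_cone hull G \<inter> {x. a \<bullet> x = 0} =
    convex_cone hull ({g\<in>G. a \<bullet> g = 0} \<union>
      (\<lambda>(g, h). (a \<bullet> g) *\<^sub>R h - (a \<bullet> h) *\<^sub>R g) ` {(g, h)\<in>G \<times> G. a \<bullet> g > 0 \<and> a \<bullet> h < 0})"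
    (is "_ = convex_cone hull ?G'")
proof
  show "convex_cone hull ?G' \<subseteq> convex_cone hull G \<inter> {x. a \<bullet> x = 0}"
  proof (rule hull_minimal)
    show "convex_cone (convex_cone hull G \<inter> {x. a \<bullet> x = 0})"
      using convex_cone_convex_cone_hull[of G] by (simp add: convex_cone_iff inner_add_right)
    have "(a \<bullet> g) *\<^sub>R h + (- (a \<bullet> h)) *\<^sub>R g \<in> convex_cone hull G"
      if "g \<in> G" "h \<in> G" "a \<bullet> g > 0" "a \<bullet> h < 0" for g h
      using that by (intro convex_cone_hull_add convex_cone_hull_mul hull_inc) auto
    then show "?G' \<subseteq> convex_cone hull G \<inter> {x. a \<bullet> x = 0}"
      by (auto intro: hull_inc simp: inner_diff_right)
  qed
  show "convex_cone hull G \<inter> {x. a \<bullet> x = 0} \<subseteq> convex_cone hull ?G'"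
  proof
    fix x assume x: "x \<in> convex_cone hull G \<inter> {x. a \<bullet> x = 0}"
    then obtain c where x_eq: "x = (\<Sum>g\<in>G. c g *\<^sub>R g)" and c: "\<forall>g\<in>G. 0 \<le> c g"
      using convex_cone_hull_finite[OF assms] by auto
    define P where "P = {g\<in>G. a \<bullet> g > 0}"
    define N where "N = {g\<in>G. a \<bullet> g < 0}"
    define Z where "Z = {g\<in>G. a \<bullet> g = 0}"
    have fin: "finite P" "finite N" "finite Z"
      using assms by (auto simp: P_def N_def Z_def)
    have split: "sum f G = sum f P + sum f N + sum f Z" for f :: "'a \<Rightarrow> 'b::comm_monoid_add"
    proof -
      have "G = P \<union> N \<union> Z" "P \<inter> N = {}" "(P \<union> N) \<inter> Z = {}"
        by (auto simp: P_def N_def Z_def)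
      then show ?thesis using fin by (simp add: sum.union_disjoint)
    qed
    define s where "s = (\<Sum>g\<in>P. c g * (a \<bullet> g))"
    have "0 = (\<Sum>g\<in>G. c g * (a \<bullet> g))"
      using x by (simp add: x_eq inner_sum_right)
    then have sN: "(\<Sum>h\<in>N. c h * (a \<bullet> h)) = - s"
      by (simp add: split s_def Z_def)
    have "(\<Sum>g\<in>P. c g *\<^sub>R g) + (\<Sum>h\<in>N. c h *\<^sub>R h) \<in> convex_cone hull ?G'"
    proof (cases "s = 0")
      case True
      have "\<forall>g\<in>P. c g * (a \<bullet> g) = 0"
        using True c fin(1) unfolding s_def by (subst sum_nonneg_eq_0_iff[symmetric]) (auto simp: P_def)
      moreover have "\<forall>h\<in>N. - (c h * (a \<bullet> h)) = 0"
        using True sN c fin(2)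
        by (subst sum_nonneg_eq_0_iff[symmetric]) (auto simp: N_def sum_negf mult_nonneg_nonpos)
      ultimately have "\<forall>g\<in>P. c g = 0" "\<forall>h\<in>N. c h = 0"
        by (auto simp: P_def N_def)
      then show ?thesis by (simp add: convex_cone_hull_contains_0)
    next
      case False
      have "(c g * c h / s) *\<^sub>R ((a \<bullet> g) *\<^sub>R h - (a \<bullet> h) *\<^sub>R g) \<in> convex_cone hull ?G'"
        if "g \<in> P" "h \<in> N" for g h
      proof (rule convex_cone_hull_mul)
        show "(a \<bullet> g) *\<^sub>R h - (a \<bullet> h) *\<^sub>R g \<in> convex_cone hull ?G'"
          using that by (intro hull_inc) (auto simp: P_def N_def)
        have "0 \<le> s" unfolding s_def using c by (auto simp: P_def intro!: sum_nonneg)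
        then show "0 \<le> c g * c h / s"
          using c that by (auto simp: P_def N_def)
      qed
      then have "(\<Sum>(g, h)\<in>P \<times> N. (c g * c h / s) *\<^sub>R ((a \<bullet> g) *\<^sub>R h - (a \<bullet> h) *\<^sub>R g))
          \<in> convex_cone hull ?G'"
        by (auto intro: convex_cone_sum[OF convex_cone_convex_cone_hull])
      then show ?thesis
        using fourier_motzkin_pairing[OF fin(1,2) False s_def[symmetric] sN] by simp
    qed
    moreover have "(\<Sum>g\<in>Z. c g *\<^sub>R g) \<in> convex_cone hull ?G'"
      using c by (intro convex_cone_sum[OF convex_cone_convex_cone_hull] convex_cone_hull_mul hull_inc)
        (auto simp: Z_def)
    ultimately show "x \<in> convex_cone hull ?G'"
      by (simp add: x_eq split convex_cone_hull_add)
  qed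
qed

lemma finitely_generated_cone_Int_hyperplane:
  fixes C :: "'a::real_inner set"
  assumes "finitely_generated_cone C"
  shows "finitely_generated_cone (C \<inter> {x. a \<bullet> x = 0})"
proof -
  obtain G where "finite G" "C = convex_cone hull G"
    using assms unfolding finitely_generated_cone_def by blast
  moreover have "finite {(g, h)\<in>G \<times> G. a \<bullet> g > 0 \<and> a \<bullet> h < 0}"
    using \<open>finite G\<close> by (auto intro: finite_subset[of _ "G \<times> G"])
  ultimately show ?thesis
    by (simp add: convex_cone_hull_Int_hyperplane finitely_generated_cone_hull)
qed

lemma finitely_generated_cone_Int_hyperplanes:
  fixes C :: "'a::real_inner set"
  assumes "finite B" "finitely_generated_cone C"
  shows "finitely_generated_cone (C \<inter> {x. \<forall>b\<in>B. b \<bullet> x = 0})"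
  using assms(1)
proof (induction B rule: finite_induct)
  case (insert b B)
  have "C \<inter> {x. \<forall>b'\<in>insert b B. b' \<bullet> x = 0} = C \<inter> {x. \<forall>b\<in>B. b \<bullet> x = 0} \<inter> {x. b \<bullet> x = 0}"
    by auto
  with insert.IH show ?case
    by (simp add: finitely_generated_cone_Int_hyperplane)
qed (simp add: assms(2))

text \<open>Intersection is the projection of the subspace cut \<open>q = p\<close> of the product
  \<open>A \<times> B\<close>, encoded as the cone \<open>{(p, p - q) | p \<in> A, q \<in> B}\<close> cut by \<open>snd = 0\<close>.\<close>
lemma finitely_generated_cone_Int:
  fixes A B :: "'a::euclidean_space set"
  assumes "finitely_generated_cone A" "finitely_generated_cone B"
  shows "finitely_generated_cone (A \<inter> B)"
proof -
  obtain G H where G: "finite G" "A = convex_cone hull G" and H: "finite H" "B = convex_cone hull H"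
    using assms unfolding finitely_generated_cone_def by blast
  define D where "D = convex_cone hull ((\<lambda>g. (g, g)) ` G \<union> (\<lambda>h. (0, - h)) ` H)"
  have lin: "linear (\<lambda>g::'a. (g, g))" "linear (\<lambda>h::'a. (0::'a, - h))"
    by (auto intro!: linearI simp: algebra_simps)
  have D_eq: "D = {(p, p - q) | p q. p \<in> A \<and> q \<in> B}"
    unfolding D_def convex_cone_hull_Un convex_cone_hull_linear_image[OF lin(1)]
      convex_cone_hull_linear_image[OF lin(2)] G H by auto
  have "finitely_generated_cone (D \<inter> {z. \<forall>b\<in>Pair 0 ` Basis. b \<bullet> z = 0})"
    using G H unfolding D_def
    by (intro finitely_generated_cone_Int_hyperplanes finitely_generated_cone_hull) auto
  moreover have "(\<forall>b\<in>Pair 0 ` Basis. b \<bullet> z = 0) \<longleftrightarrow> snd z = (0::'a)" for z :: "'a \<times> 'a"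
    by (cases z) (auto simp: inner_Pair euclidean_all_zero_iff inner_commute)
  moreover have "A \<inter> B = fst ` (D \<inter> {z. snd z = 0})"
    unfolding D_eq by force
  ultimately show ?thesis
    using finitely_generated_cone_linear_image[OF _ linear_fst] by simp
qed

lemma finitely_generated_cone_Inter:
  fixes \<C> :: "'a::euclidean_space set set"
  assumes "finite \<C>" "\<C> \<noteq> {}" "\<And>C. C \<in> \<C> \<Longrightarrow> finitely_generated_cone C"
  shows "finitely_generated_cone (\<Inter>\<C>)"
  using assms by (induction \<C> rule: finite_ne_induct) (auto intro: finitely_generated_cone_Int)

section \<open>One period of exercising and trading\<close>

text \<open>\<open>(v, a) \<in> step_cone C K x\<close>: holding \<open>v\<close> with \<open>a\<close> units of exercise still due, one
  can receive \<open>c\<close> units of the payoff \<open>x\<close> now, trade in \<open>K\<close> and end up in \<open>C\<close>.\<close>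
definition step_cone :: "('a::real_vector \<times> real) set \<Rightarrow> 'a set \<Rightarrow> 'a \<Rightarrow> ('a \<times> real) set" where
  "step_cone C K x = {(w + k - c *\<^sub>R x, b + c) | w b k c. (w, b) \<in> C \<and> k \<in> K \<and> 0 \<le> c}"

lemma mem_step_cone:
  "(v, a) \<in> step_cone C K x \<longleftrightarrow> (\<exists>w b c. (w, b) \<in> C \<and> 0 \<le> c \<and> a = b + c \<and> v + c *\<^sub>R x - w \<in> K)"
proof
  assume "(v, a) \<in> step_cone C K x"
  then obtain w b k c where "v = w + k - c *\<^sub>R x" "a = b + c" "(w, b) \<in> C" "k \<in> K" "0 \<le> c"
    unfolding step_cone_def by blast
  then show "\<exists>w b c. (w, b) \<in> C \<and> 0 \<le> c \<and> a = b + c \<and> v + c *\<^sub>R x - w \<in> K"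
    by (intro exI[of _ w] exI[of _ b] exI[of _ c]) simp
next
  assume "\<exists>w b c. (w, b) \<in> C \<and> 0 \<le> c \<and> a = b + c \<and> v + c *\<^sub>R x - w \<in> K"
  then obtain w b c where "(w, b) \<in> C" "0 \<le> c" "a = b + c" "v + c *\<^sub>R x - w \<in> K"
    by blast
  then show "(v, a) \<in> step_cone C K x"
    unfolding step_cone_def
    by (intro CollectI exI[of _ w] exI[of _ b] exI[of _ "v + c *\<^sub>R x - w"] exI[of _ c]) simp
qed

lemma mem_step_cone_zero: "(v, a) \<in> step_cone {0} K x \<longleftrightarrow> 0 \<le> a \<and> v + a *\<^sub>R x \<in> K"
  by (auto simp: mem_step_cone zero_prod_def)

lemma step_cone_eq_sums:
  "step_cone C K x = (\<Union>p\<in>C. \<Union>q\<in>(\<Union>r\<in>(\<lambda>k. (k, 0)) ` K. \<Union>s\<in>convex_cone hull {(- x, 1)}. {r + s}). {p + q})"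
  unfolding step_cone_def convex_cone_hull_singleton by (force simp: algebra_simps)

lemma convex_cone_step_cone:
  assumes "convex_cone C" "convex_cone K"
  shows "convex_cone (step_cone C K x)"
proof -
  have "linear (\<lambda>k::'a. (k, 0::real))" by (auto intro!: linearI)
  with assms show ?thesis
    unfolding step_cone_eq_sums
    by (intro convex_cone_sums convex_cone_linear_image conjI convex_cone_convex_cone_hull)
qed

lemma finitely_generated_cone_step_cone:
  assumes "finitely_generated_cone C" "finitely_generated_cone K"
  shows "finitely_generated_cone (step_cone C K x)"
proof -
  have "linear (\<lambda>k::'a. (k, 0::real))" by (auto intro!: linearI)
  then have "finitely_generated_cone {r + s | r s. r \<in> (\<lambda>k. (k, 0::real)) ` K \<and> s \<in> convex_cone hull {(- x, 1)}}"
    by (intro finitely_generated_cone_sums finitely_generated_cone_linear_image assms(2)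
        finitely_generated_cone_hull) auto
  with assms(1) have "finitely_generated_cone {p + q | p q. p \<in> C \<and>
      q \<in> {r + s | r s. r \<in> (\<lambda>k. (k, 0)) ` K \<and> s \<in> convex_cone hull {(- x, 1)}}}"
    by (rule finitely_generated_cone_sums)
  moreover have "{p + q | p q. p \<in> C \<and>
      q \<in> {r + s | r s. r \<in> (\<lambda>k. (k, 0)) ` K \<and> s \<in> convex_cone hull {(- x, 1)}}} = step_cone C K x"
    unfolding step_cone_eq_sums by blast
  ultimately show ?thesis by simp
qed

lemma step_cone_nonneg:
  "(\<And>w b. (w, b) \<in> C \<Longrightarrow> 0 \<le> b) \<Longrightarrow> (v, a) \<in> step_cone C K x \<Longrightarrow> 0 \<le> a"
  unfolding mem_step_cone by force

text \<open>Dehomogenisation: the slice at height \<open>1\<close> of \<open>step_cone C K x\<close> is the convex hull of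
  exercising everything now and exercising later, the paper's \<open>conv(U \<union> V)\<close>.\<close>
lemma convex_hull_step_cone_slices:
  fixes C :: "('a::real_vector \<times> real) set" and x :: 'a
  assumes C: "convex_cone C" "\<And>w b. (w, b) \<in> C \<Longrightarrow> 0 \<le> b" and K: "convex_cone K"
  defines "H \<equiv> step_cone C K x"
  shows "convex hull ((\<lambda>q. - x + q) ` {q. (q, 0) \<in> H} \<union> {w + q | w q. (w, 1) \<in> C \<and> (q, 0) \<in> H})
    = {v. (v, 1) \<in> H}" (is "convex hull (?U \<union> ?V) = _")
proof
  have H: "convex_cone H"
    unfolding H_def by (rule convex_cone_step_cone[OF C(1) K])
  have C0: "(0, 0) \<in> C" and K0: "0 \<in> K"
    using C(1) K by (auto dest: convex_cone_contains_0 simp: zero_prod_def)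
  have KH: "(k, 0) \<in> H" if "k \<in> K" for k
    unfolding H_def mem_step_cone using C0 that by (intro exI[of _ 0] exI[of _ 0] exI[of _ 0]) auto
  have CH: "(w, b) \<in> H" if "(w, b) \<in> C" for w b
    unfolding H_def mem_step_cone using K0 that by (intro exI[of _ w] exI[of _ b] exI[of _ 0]) auto
  have xH: "(- x, 1) \<in> H"
    unfolding H_def mem_step_cone using C0 K0 by (intro exI[of _ 0] exI[of _ 0] exI[of _ 1]) auto
  show "convex hull (?U \<union> ?V) \<subseteq> {v. (v, 1) \<in> H}"
  proof (rule hull_minimal)
    show "convex {v. (v, 1) \<in> H}"
    proof (rule convexI)
      fix v v' and u u' :: real
      assume "v \<in> {v. (v, 1) \<in> H}" "v' \<in> {v. (v, 1) \<in> H}" "0 \<le> u" "0 \<le> u'" "u + u' = 1"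
      then show "u *\<^sub>R v + u' *\<^sub>R v' \<in> {v. (v, 1) \<in> H}"
        using convexD[of H "(v, 1)" "(v', 1)" u u'] H by (simp add: convex_cone_def)
    qed
    show "?U \<union> ?V \<subseteq> {v. (v, 1) \<in> H}"
      using convex_cone_add[OF H xH] convex_cone_add[OF H CH] by force
  qed
  show "{v. (v, 1) \<in> H} \<subseteq> convex hull (?U \<union> ?V)"
  proof
    fix v assume "v \<in> {v. (v, 1) \<in> H}"
    then obtain w b c where wbc: "(w, b) \<in> C" "0 \<le> c" "1 = b + c" "v + c *\<^sub>R x - w \<in> K"
      unfolding H_def mem_step_cone by auto
    define k where "k = v + c *\<^sub>R x - w"
    have b: "0 \<le> b" using C(2) wbc(1) .
    show "v \<in> convex hull (?U \<union> ?V)"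
    proof (cases "b = 0")
      case True
      have "(w + k, 0) \<in> H"
        using convex_cone_add[OF H CH[OF wbc(1)] KH[OF wbc(4)[folded k_def]]] True by simp
      moreover have "v = - x + (w + k)" using wbc True by (simp add: k_def)
      ultimately show ?thesis by (blast intro: hull_inc)
    next
      case False
      with b have "0 < b" by simp
      have "((1 / b) *\<^sub>R w, 1) \<in> C"
        using convex_cone_scaleR[OF C(1), of "1 / b" "(w, b)"] \<open>0 < b\<close> wbc(1) by simp
      moreover have "((1 / b) *\<^sub>R k, 0) \<in> H"
        using convex_cone_scaleR[OF H, of "1 / b" "(k, 0)"] KH wbc(4) \<open>0 < b\<close> by (simp add: k_def)
      ultimately have "(1 / b) *\<^sub>R w + (1 / b) *\<^sub>R k \<in> ?V"
        using \<open>0 < b\<close> by auto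
      moreover have "- x \<in> ?U"
        using convex_cone_contains_0[OF H] by (force simp: zero_prod_def)
      ultimately have "b *\<^sub>R ((1 / b) *\<^sub>R w + (1 / b) *\<^sub>R k) + c *\<^sub>R (- x) \<in> convex hull (?U \<union> ?V)"
        using b wbc(2,3)
        by (intro convexD[OF convex_convex_hull] hull_inc) auto
      moreover have "b *\<^sub>R ((1 / b) *\<^sub>R w + (1 / b) *\<^sub>R k) + c *\<^sub>R (- x) = v"
        using \<open>0 < b\<close> by (simp add: k_def algebra_simps)
      ultimately show ?thesis by simp
    qed
  qed
qed

text \<open>A closed cone that misses \<open>(- e, 0)\<close> misses a ball around it, and by scaling this
  bounds \<open>- x\<close> whenever \<open>(x e, 1)\<close> lies in the cone.\<close>
lemma cone_slice_Sup_attained: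
  fixes H :: "('a::real_normed_vector \<times> real) set"
  assumes "closed H" "convex_cone H" "(- e, 0) \<notin> H" "(x\<^sub>0 *\<^sub>R e, 1) \<in> H"
  defines "S \<equiv> {- x | x. (x *\<^sub>R e, 1) \<in> H}"
  shows "Sup S \<in> S \<and> (\<forall>v\<in>S. v \<le> Sup S)"
proof -
  obtain \<epsilon> where "\<epsilon> > 0" and \<epsilon>: "ball (- e, 0) \<epsilon> \<subseteq> - H"
    using assms(1,3) open_contains_ball[of "- H"] by (auto simp: open_Compl)
  have bounded: "v \<le> 1 / \<epsilon>" if "v \<in> S" for v
  proof (rule ccontr)
    assume "\<not> v \<le> 1 / \<epsilon>"
    then have "1 / \<epsilon> < v" by simp
    moreover have "0 < 1 / \<epsilon>" using \<open>\<epsilon> > 0\<close> by simp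
    ultimately have "v > 0" by linarith
    with \<open>1 / \<epsilon> < v\<close> \<open>\<epsilon> > 0\<close> have "1 / v < \<epsilon>"
      by (simp add: field_simps)
    have "(- v *\<^sub>R e, 1) \<in> H"
      using \<open>v \<in> S\<close> by (auto simp: S_def)
    then have "(1 / v) *\<^sub>R (- v *\<^sub>R e, 1::real) \<in> H"
      using \<open>v > 0\<close> by (intro convex_cone_scaleR[OF assms(2)]) auto
    moreover have "(1 / v) *\<^sub>R (- v *\<^sub>R e, 1::real) \<in> ball (- e, 0) \<epsilon>"
      using \<open>v > 0\<close> \<open>1 / v < \<epsilon>\<close> by (simp add: dist_Pair_Pair)
    ultimately show False using \<epsilon> by auto
  qed
  have "S = (\<lambda>v. (- v *\<^sub>R e, 1::real)) -` H"
    unfolding S_def by (auto intro!: exI[of _ "- v" for v])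
  then have "closed S"
    using assms(1) by (auto intro!: continuous_closed_vimage continuous_intros)
  moreover have "S \<noteq> {}"
    using assms(4) by (auto simp: S_def)
  moreover have "bdd_above S"
    using bounded by (rule bdd_aboveI)
  ultimately show ?thesis
    by (simp add: closed_contains_Sup cSup_upper)
qed

section \<open>Solvency cones and measurability\<close>

lemma finitely_generated_Kcone: "finitely_generated_cone (Kcone rate t \<omega>)"
proof -
  have "{axis j 1 | j. True} \<union> {rate t \<omega> j k *\<^sub>R axis j 1 - axis k 1 | j k. True}
      = range (\<lambda>j. axis j (1::real)) \<union> range (\<lambda>(j, k). rate t \<omega> j k *\<^sub>R axis j 1 - axis k (1::real))"
    by auto
  then show ?thesis
    unfolding Kcone_def by (simp add: finitely_generated_cone_hull)
qed

lemma convex_cone_Kcone: "convex_cone (Kcone rate t \<omega>)"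
  by (rule finitely_generated_cone_imp_convex_cone[OF finitely_generated_Kcone])

text \<open>Every position can be made solvent by adding enough units of asset \<open>j\<close>: positive
  entries are dropped via \<open>e\<^sup>i\<close>, negative ones bought with asset \<open>j\<close>.\<close>
lemma Kcone_axis_absorbs: "\<exists>x. x *\<^sub>R axis j 1 + u \<in> Kcone rate t \<omega>"
proof -
  define p where "p i = max (u $ i) 0" for i
  define n where "n i = max (- (u $ i)) 0" for i
  define z where "z = (\<Sum>i\<in>UNIV. p i *\<^sub>R axis i 1 + n i *\<^sub>R (rate t \<omega> j i *\<^sub>R axis j 1 - axis i (1::real)))"
  have "z \<in> Kcone rate t \<omega>"
    unfolding z_def
    by (intro convex_cone_sum[OF convex_cone_Kcone] convex_cone_add[OF convex_cone_Kcone]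
        convex_cone_scaleR[OF convex_cone_Kcone])
      (auto simp: p_def n_def Kcone_def intro: hull_inc)
  moreover have "z = (\<Sum>i\<in>UNIV. n i * rate t \<omega> j i) *\<^sub>R axis j 1 + u"
  proof (rule vec_eq_iff[THEN iffD2], intro allI)
    fix k
    have "z $ k = (\<Sum>i\<in>UNIV. (if k = i then p i - n i else 0) + n i * rate t \<omega> j i * axis j 1 $ k)"
      unfolding z_def by (simp, rule sum.cong) (auto simp: axis_def algebra_simps)
    also have "\<dots> = u $ k + (\<Sum>i\<in>UNIV. n i * rate t \<omega> j i) * axis j 1 $ k"
      by (simp add: sum.distrib sum_distrib_right p_def n_def)
    finally show "z $ k = ((\<Sum>i\<in>UNIV. n i * rate t \<omega> j i) *\<^sub>R axis j 1 + u) $ k"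
      by simp
  qed
  ultimately show ?thesis by auto
qed

lemma measurable_atD: "measurable_at A X \<Longrightarrow> \<mu> \<in> A \<Longrightarrow> \<omega> \<in> \<mu> \<Longrightarrow> \<omega>' \<in> \<mu> \<Longrightarrow> X \<omega> = X \<omega>'"
  unfolding measurable_at_def by blast

lemma measurable_at_const [simp]: "measurable_at A (\<lambda>_. c)"
  unfolding measurable_at_def by simp

text \<open>A measurable family of nonempty choice sets has a measurable selection: the choice
  made by \<open>SOME\<close> depends on \<open>\<omega>\<close> only through \<open>P \<omega>\<close>.\<close>
lemma measurable_at_choice:
  assumes "measurable_at A P" "\<forall>\<omega>\<in>S. \<exists>x. P \<omega> x"
  obtains X where "measurable_at A X" "\<forall>\<omega>\<in>S. P \<omega> (X \<omega>)"
proof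
  show "measurable_at A (\<lambda>\<omega>. SOME x. P \<omega> x)"
    using assms(1) unfolding measurable_at_def by metis
  show "\<forall>\<omega>\<in>S. P \<omega> (SOME x. P \<omega> x)"
    using assms(2) by (metis someI_ex)
qed

lemma measurable_at_comp: "measurable_at A X \<Longrightarrow> measurable_at A (\<lambda>\<omega>. f (X \<omega>))"
  unfolding measurable_at_def by metis

section \<open>Hedging cones on the scenario tree\<close>

locale option_market =
  fixes Omega :: "'w set" and F :: "nat \<Rightarrow> 'w set set" and T :: nat
    and rate :: "nat \<Rightarrow> 'w \<Rightarrow> 'd::finite \<Rightarrow> 'd \<Rightarrow> real"
    and xi :: "nat \<Rightarrow> 'w \<Rightarrow> real^'d"
  assumes finite_Omega: "finite Omega" and Omega_nonempty: "Omega \<noteq> {}"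
    and partition: "\<forall>t\<le>T. partition_on Omega (F t)"
    and refines: "\<forall>t<T. \<forall>\<nu>\<in>F (Suc t). \<exists>\<mu>\<in>F t. \<nu> \<subseteq> \<mu>"
    and F0: "F 0 = {Omega}"
    and rate_adapted: "\<forall>t\<le>T. measurable_at (F t) (rate t)"
    and xi_adapted: "\<forall>t\<le>T. measurable_at (F t) (xi t)"
begin

definition node :: "nat \<Rightarrow> 'w \<Rightarrow> 'w set" where
  "node t \<omega> = (SOME \<mu>. \<mu> \<in> F t \<and> \<omega> \<in> \<mu>)"

definition Kn :: "nat \<Rightarrow> 'w set \<Rightarrow> (real^'d) set" where
  "Kn t \<mu> = Kcone rate t (SOME \<omega>. \<omega> \<in> \<mu>)"

lemma node_subset: "t \<le> T \<Longrightarrow> \<mu> \<in> F t \<Longrightarrow> \<mu> \<subseteq> Omega"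
  using partition unfolding partition_on_def by blast

lemma node_nonempty: "t \<le> T \<Longrightarrow> \<mu> \<in> F t \<Longrightarrow> \<mu> \<noteq> {}"
  using partition unfolding partition_on_def by blast

lemma node_unique: "t \<le> T \<Longrightarrow> \<mu> \<in> F t \<Longrightarrow> \<mu>' \<in> F t \<Longrightarrow> \<omega> \<in> \<mu> \<Longrightarrow> \<omega> \<in> \<mu>' \<Longrightarrow> \<mu> = \<mu>'"
  using partition unfolding partition_on_def disjoint_def by blast

lemma node_mem: "t \<le> T \<Longrightarrow> \<omega> \<in> Omega \<Longrightarrow> node t \<omega> \<in> F t \<and> \<omega> \<in> node t \<omega>"
proof -
  assume "t \<le> T" "\<omega> \<in> Omega"
  then have "\<exists>\<mu>. \<mu> \<in> F t \<and> \<omega> \<in> \<mu>"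
    using partition unfolding partition_on_def by blast
  then show ?thesis
    unfolding node_def by (rule someI_ex)
qed

lemma node_eq: "t \<le> T \<Longrightarrow> \<mu> \<in> F t \<Longrightarrow> \<omega> \<in> \<mu> \<Longrightarrow> node t \<omega> = \<mu>"
  using node_mem[of t \<omega>] node_subset[of t \<mu>] node_unique[of t "node t \<omega>" \<mu> \<omega>] by blast

lemma node_0: "\<omega> \<in> Omega \<Longrightarrow> node 0 \<omega> = Omega"
  using node_eq[of 0 Omega \<omega>] F0 by simp

lemma nodeval_eq: "measurable_at (F t) X \<Longrightarrow> \<mu> \<in> F t \<Longrightarrow> \<omega> \<in> \<mu> \<Longrightarrow> nodeval X \<mu> = X \<omega>"
  unfolding nodeval_def using someI[of "\<lambda>\<omega>. \<omega> \<in> \<mu>" \<omega>] by (blast dest: measurable_atD)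

lemma xi_node: "t \<le> T \<Longrightarrow> \<omega> \<in> Omega \<Longrightarrow> nodeval (xi t) (node t \<omega>) = xi t \<omega>"
  using nodeval_eq[of t "xi t"] node_mem[of t \<omega>] xi_adapted by blast

lemma Kn_eq: "t \<le> T \<Longrightarrow> \<mu> \<in> F t \<Longrightarrow> \<omega> \<in> \<mu> \<Longrightarrow> Kn t \<mu> = Kcone rate t \<omega>"
  using nodeval_eq[of t "rate t" \<mu> \<omega>] rate_adapted unfolding Kn_def nodeval_def Kcone_def by simp

lemma Kn_node: "t \<le> T \<Longrightarrow> \<omega> \<in> Omega \<Longrightarrow> Kn t (node t \<omega>) = Kcone rate t \<omega>"
  using Kn_eq node_mem[of t \<omega>] by blast

lemma measurable_at_Suc:
  assumes "t < T" "measurable_at (F t) X"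
  shows "measurable_at (F (Suc t)) X"
  unfolding measurable_at_def
proof (intro ballI)
  fix \<nu> \<omega> \<omega>' assume "\<nu> \<in> F (Suc t)" "\<omega> \<in> \<nu>" "\<omega>' \<in> \<nu>"
  moreover obtain \<mu> where "\<mu> \<in> F t" "\<nu> \<subseteq> \<mu>"
    using refines assms(1) \<open>\<nu> \<in> F (Suc t)\<close> by blast
  ultimately have "\<omega> \<in> \<mu>" "\<omega>' \<in> \<mu>" by auto
  then show "X \<omega> = X \<omega>'"
    by (rule measurable_atD[OF assms(2) \<open>\<mu> \<in> F t\<close>])
qed

lemma measurable_at_cong:
  assumes "t \<le> T" "measurable_at (F t) X" "\<forall>\<omega>\<in>Omega. Y \<omega> = X \<omega>"
  shows "measurable_at (F t) Y"
  unfolding measurable_at_def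
proof (intro ballI)
  fix \<mu> \<omega> \<omega>' assume "\<mu> \<in> F t" "\<omega> \<in> \<mu>" "\<omega>' \<in> \<mu>"
  moreover have "\<omega> \<in> Omega" "\<omega>' \<in> Omega"
    using node_subset[OF assms(1) \<open>\<mu> \<in> F t\<close>] \<open>\<omega> \<in> \<mu>\<close> \<open>\<omega>' \<in> \<mu>\<close> by auto
  ultimately show "Y \<omega> = Y \<omega>'"
    using assms(3) measurable_atD[OF assms(2)] by metis
qed

lemma node_Suc: "t < T \<Longrightarrow> \<omega> \<in> Omega \<Longrightarrow> node (Suc t) \<omega> \<in> succ_nodes F t (node t \<omega>)"
proof -
  assume "t < T" "\<omega> \<in> Omega"
  then have \<nu>: "node (Suc t) \<omega> \<in> F (Suc t)" "\<omega> \<in> node (Suc t) \<omega>"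
    using node_mem[of "Suc t" \<omega>] by auto
  with \<open>t < T\<close> obtain \<mu> where "\<mu> \<in> F t" "node (Suc t) \<omega> \<subseteq> \<mu>"
    using refines by blast
  moreover have "node t \<omega> = \<mu>"
    using \<open>t < T\<close> \<open>\<mu> \<in> F t\<close> \<nu>(2) calculation(2) by (intro node_eq) auto
  ultimately show ?thesis
    using \<nu>(1) by (simp add: succ_nodes_def)
qed

lemma succ_nodes_finite: "t < T \<Longrightarrow> finite (succ_nodes F t \<mu>)"
proof -
  assume "t < T"
  then have "succ_nodes F t \<mu> \<subseteq> Pow Omega"
    using node_subset[of "Suc t"] by (auto simp: succ_nodes_def)
  then show ?thesis
    using finite_Omega finite_subset by blast
qed

lemma succ_nodes_nonempty: "t < T \<Longrightarrow> \<mu> \<in> F t \<Longrightarrow> succ_nodes F t \<mu> \<noteq> {}"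
proof -
  assume "t < T" "\<mu> \<in> F t"
  moreover obtain \<omega> where "\<omega> \<in> \<mu>"
    using node_nonempty[of t \<mu>] \<open>t < T\<close> \<open>\<mu> \<in> F t\<close> by auto
  moreover have "\<omega> \<in> Omega"
    using node_subset[of t \<mu>] \<open>t < T\<close> \<open>\<mu> \<in> F t\<close> \<open>\<omega> \<in> \<mu>\<close> by auto
  ultimately show ?thesis
    using node_Suc[of t \<omega>] node_eq[of t \<mu> \<omega>] by auto
qed

lemma mem_Inter_succ_nodes:
  assumes "t < T" "measurable_at (F t) Z" "\<forall>\<omega>'\<in>Omega. Z \<omega>' \<in> G (node (Suc t) \<omega>')" "\<omega> \<in> Omega"
  shows "Z \<omega> \<in> (\<Inter>\<nu>\<in>succ_nodes F t (node t \<omega>). G \<nu>)"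
proof
  fix \<nu> assume "\<nu> \<in> succ_nodes F t (node t \<omega>)"
  then have \<nu>: "\<nu> \<in> F (Suc t)" "\<nu> \<subseteq> node t \<omega>"
    by (auto simp: succ_nodes_def)
  then obtain \<omega>' where "\<omega>' \<in> \<nu>"
    using node_nonempty[of "Suc t" \<nu>] assms(1) by auto
  with \<nu> assms(1) have "\<omega>' \<in> Omega" "node (Suc t) \<omega>' = \<nu>" "\<omega>' \<in> node t \<omega>"
    using node_subset[of "Suc t" \<nu>] node_eq[of "Suc t" \<nu> \<omega>'] by auto
  moreover have "node t \<omega> \<in> F t" "\<omega> \<in> node t \<omega>"
    using node_mem[of t \<omega>] assms(1,4) by auto
  ultimately show "Z \<omega> \<in> G \<nu>"
    using assms(3) measurable_atD[OF assms(2), of "node t \<omega>" \<omega>' \<omega>] by auto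
qed

text \<open>\<open>hedge_cone n \<mu>\<close> belongs to a node \<open>\<mu>\<close> at time \<open>T - n\<close>, indexed like \<open>Zrec\<close>; its
  elements are characterised in \<open>hedge_cone_iff_hedge_from\<close>.\<close>
primrec hedge_cone :: "nat \<Rightarrow> 'w set \<Rightarrow> ((real^'d) \<times> real) set" where
  "hedge_cone 0 \<mu> = step_cone {0} (Kn T \<mu>) (nodeval (xi T) \<mu>)"
| "hedge_cone (Suc n) \<mu> = step_cone (\<Inter>\<nu>\<in>succ_nodes F (T - Suc n) \<mu>. hedge_cone n \<nu>)
     (Kn (T - Suc n) \<mu>) (nodeval (xi (T - Suc n)) \<mu>)"

lemma finitely_generated_hedge_cone:
  "n \<le> T \<Longrightarrow> \<mu> \<in> F (T - n) \<Longrightarrow> finitely_generated_cone (hedge_cone n \<mu>)"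
proof (induction n arbitrary: \<mu>)
  case 0
  have "finitely_generated_cone ({0} :: ((real^'d) \<times> real) set)"
    using finitely_generated_cone_hull[of "{}"] by simp
  then show ?case
    by (simp add: Kn_def finitely_generated_cone_step_cone finitely_generated_Kcone)
next
  case (Suc n)
  then have "T - Suc n < T" "Suc (T - Suc n) = T - n" by auto
  then have "finite (succ_nodes F (T - Suc n) \<mu>)" "succ_nodes F (T - Suc n) \<mu> \<noteq> {}"
    "\<And>\<nu>. \<nu> \<in> succ_nodes F (T - Suc n) \<mu> \<Longrightarrow> \<nu> \<in> F (T - n)"
    using Suc.prems succ_nodes_finite[of "T - Suc n" \<mu>] succ_nodes_nonempty[of "T - Suc n" \<mu>]
    by (auto simp: succ_nodes_def)
  with Suc have "finitely_generated_cone (\<Inter>\<nu>\<in>succ_nodes F (T - Suc n) \<mu>. hedge_cone n \<nu>)"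
    by (intro finitely_generated_cone_Inter) auto
  then show ?case
    by (simp add: Kn_def finitely_generated_cone_step_cone finitely_generated_Kcone)
qed

lemma convex_cone_hedge_cone: "n \<le> T \<Longrightarrow> \<mu> \<in> F (T - n) \<Longrightarrow> convex_cone (hedge_cone n \<mu>)"
  by (rule finitely_generated_cone_imp_convex_cone[OF finitely_generated_hedge_cone])

lemma hedge_cone_nonneg: "n \<le> T \<Longrightarrow> \<mu> \<in> F (T - n) \<Longrightarrow> (v, a) \<in> hedge_cone n \<mu> \<Longrightarrow> 0 \<le> a"
proof (induction n arbitrary: \<mu> v a)
  case 0
  then show ?case
    by (intro step_cone_nonneg[of "{0}" v a]) (auto simp: zero_prod_def)
next
  case (Suc n)
  then have "T - Suc n < T" "Suc (T - Suc n) = T - n" by auto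
  with Suc.prems obtain \<nu> where "\<nu> \<in> succ_nodes F (T - Suc n) \<mu>"
    using succ_nodes_nonempty by blast
  with Suc show ?case
    by (intro step_cone_nonneg[of "\<Inter>\<nu>\<in>succ_nodes F (T - Suc n) \<mu>. hedge_cone n \<nu>" v a])
      (auto simp: succ_nodes_def \<open>Suc (T - Suc n) = T - n\<close>)
qed

text \<open>\<open>(y, ch)\<close>, looked at from time \<open>t\<close> on, is a buyer's hedge that starts in position \<open>Y\<close>
  and still has to exercise the mass \<open>A\<close> of a mixed stopping time.\<close>
definition hedge_from :: "nat \<Rightarrow> ('w \<Rightarrow> real^'d) \<Rightarrow> ('w \<Rightarrow> real) \<Rightarrow> (nat \<Rightarrow> 'w \<Rightarrow> real^'d)
    \<Rightarrow> (nat \<Rightarrow> 'w \<Rightarrow> real) \<Rightarrow> bool" where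
  "hedge_from t Y A y ch \<longleftrightarrow> (\<forall>\<omega>\<in>Omega. y t \<omega> = Y \<omega>) \<and>
     (\<forall>s\<in>{Suc t..Suc T}. measurable_at (F (s - 1)) (y s)) \<and> (\<forall>\<omega>\<in>Omega. y (Suc T) \<omega> = 0) \<and>
     (\<forall>s\<in>{t..T}. measurable_at (F s) (ch s) \<and> (\<forall>\<omega>\<in>Omega. 0 \<le> ch s \<omega>)) \<and>
     (\<forall>\<omega>\<in>Omega. (\<Sum>s=t..T. ch s \<omega>) = A \<omega>) \<and>
     (\<forall>s\<in>{t..T}. \<forall>\<omega>\<in>Omega. y s \<omega> + ch s \<omega> *\<^sub>R xi s \<omega> - y (Suc s) \<omega> \<in> Kcone rate s \<omega>)"

lemma hedge_from_end:
  "\<forall>\<omega>\<in>Omega. Y \<omega> = 0 \<and> A \<omega> = 0 \<Longrightarrow> hedge_from (Suc T) Y A (\<lambda>_ _. 0) (\<lambda>_ _. 0)"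
  by (simp add: hedge_from_def)

lemma hedge_from_tail:
  "t \<le> T \<Longrightarrow> hedge_from t Y A y ch \<Longrightarrow> hedge_from (Suc t) (y (Suc t)) (\<lambda>\<omega>. A \<omega> - ch t \<omega>) y ch"
  by (auto simp: hedge_from_def sum.atLeast_Suc_atMost)

lemma hedge_from_cons:
  assumes "t \<le> T" and hedge: "hedge_from (Suc t) Y' A' y ch"
    and meas: "measurable_at (F t) Y'" "measurable_at (F t) c"
    and step: "\<forall>\<omega>\<in>Omega. 0 \<le> c \<omega> \<and> A \<omega> = A' \<omega> + c \<omega> \<and> Y \<omega> + c \<omega> *\<^sub>R xi t \<omega> - Y' \<omega> \<in> Kcone rate t \<omega>"
  shows "hedge_from t Y A (y(t := Y)) (ch(t := c))"
proof -
  have "measurable_at (F t) (y (Suc t))"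
    using hedge by (intro measurable_at_cong[OF \<open>t \<le> T\<close> meas(1)]) (simp add: hedge_from_def)
  have "\<forall>s\<in>{Suc t..Suc T}. measurable_at (F (s - 1)) (y s)"
  proof
    fix s assume "s \<in> {Suc t..Suc T}"
    then have "s = Suc t \<or> s \<in> {Suc (Suc t)..Suc T}" by auto
    then show "measurable_at (F (s - 1)) (y s)"
      using \<open>measurable_at (F t) (y (Suc t))\<close> hedge by (auto simp: hedge_from_def)
  qed
  then have "\<forall>s\<in>{Suc t..Suc T}. measurable_at (F (s - 1)) ((y(t := Y)) s)"
    by simp
  moreover have "\<forall>\<omega>\<in>Omega. (\<Sum>s=t..T. (ch(t := c)) s \<omega>) = A \<omega>"
    using hedge step \<open>t \<le> T\<close> by (simp add: hedge_from_def sum.atLeast_Suc_atMost)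
  moreover have "measurable_at (F s) ((ch(t := c)) s) \<and> (\<forall>\<omega>\<in>Omega. 0 \<le> (ch(t := c)) s \<omega>) \<and>
      (\<forall>\<omega>\<in>Omega. (y(t := Y)) s \<omega> + (ch(t := c)) s \<omega> *\<^sub>R xi s \<omega> - (y(t := Y)) (Suc s) \<omega>
        \<in> Kcone rate s \<omega>)" if "s \<in> {t..T}" for s
  proof -
    from that consider "s = t" | "s \<in> {Suc t..T}" by force
    then show ?thesis
      by cases (use hedge step meas(2) in \<open>auto simp: hedge_from_def\<close>)
  qed
  ultimately show ?thesis
    using hedge \<open>t \<le> T\<close> by (simp add: hedge_from_def)
qed

lemma hedge_from_zero_mass:
  assumes "hedge_from t Y (\<lambda>_. 0) y ch" "\<omega> \<in> Omega" "s \<in> {t..T}"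
  shows "ch s \<omega> = 0"
proof -
  have "(\<Sum>s=t..T. ch s \<omega>) = 0" "\<forall>s\<in>{t..T}. 0 \<le> ch s \<omega>"
    using assms(1,2) by (auto simp: hedge_from_def)
  with assms(3) show ?thesis
    using sum_nonneg_eq_0_iff[of "{t..T}" "\<lambda>s. ch s \<omega>"] by auto
qed

lemma hedge_from_mem_step_cone:
  assumes "t \<le> T" "hedge_from t Y A y ch" "\<omega> \<in> Omega" "(y (Suc t) \<omega>, A \<omega> - ch t \<omega>) \<in> C"
  shows "(Y \<omega>, A \<omega>) \<in> step_cone C (Kn t (node t \<omega>)) (nodeval (xi t) (node t \<omega>))"
proof -
  have "t \<in> {t..T}" using assms(1) by simp
  then have "y t \<omega> = Y \<omega>" "0 \<le> ch t \<omega>" "y t \<omega> + ch t \<omega> *\<^sub>R xi t \<omega> - y (Suc t) \<omega> \<in> Kcone rate t \<omega>"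
    using assms(2,3) unfolding hedge_from_def by blast+
  with assms(4) have "(y (Suc t) \<omega>, A \<omega> - ch t \<omega>) \<in> C \<and> 0 \<le> ch t \<omega> \<and> A \<omega> = (A \<omega> - ch t \<omega>) + ch t \<omega>
      \<and> Y \<omega> + ch t \<omega> *\<^sub>R xi t \<omega> - y (Suc t) \<omega> \<in> Kcone rate t \<omega>"
    by simp
  then show ?thesis
    unfolding mem_step_cone xi_node[OF assms(1,3)] Kn_node[OF assms(1,3)] by blast
qed

lemma hedge_from_mem_hedge_cone:
  "n \<le> T \<Longrightarrow> measurable_at (F (T - n)) A \<Longrightarrow> hedge_from (T - n) Y A y ch \<Longrightarrow> \<omega> \<in> Omega
    \<Longrightarrow> (Y \<omega>, A \<omega>) \<in> hedge_cone n (node (T - n) \<omega>)"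
proof (induction n arbitrary: Y A \<omega>)
  case 0
  then have "(y (Suc T) \<omega>, A \<omega> - ch T \<omega>) \<in> {0}"
    by (simp add: hedge_from_def zero_prod_def)
  with 0 show ?case
    using hedge_from_mem_step_cone[of T] by simp
next
  case (Suc n)
  define t where "t = T - Suc n"
  have t: "t < T" "Suc t = T - n" "n \<le> T"
    using Suc.prems(1) by (auto simp: t_def)
  have hedge: "hedge_from t Y A y ch"
    using Suc.prems(3) by (simp add: t_def)
  have "Suc t \<in> {Suc t..Suc T}" "t \<in> {t..T}" using t(1) by auto
  then have "measurable_at (F (Suc t - 1)) (y (Suc t))" "measurable_at (F t) (ch t)"
    using hedge unfolding hedge_from_def by blast+
  moreover have "measurable_at (F t) A"
    using Suc.prems(2) by (simp add: t_def)
  ultimately have meas: "measurable_at (F t) (y (Suc t))" "measurable_at (F t) (ch t)" "measurable_at (F t) A"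
    by simp_all
  then have "measurable_at (F t) (\<lambda>\<omega>. A \<omega> - ch t \<omega>)"
    and tail_meas: "measurable_at (F t) (\<lambda>\<omega>. (y (Suc t) \<omega>, A \<omega> - ch t \<omega>))"
    unfolding measurable_at_def by metis+
  then have "measurable_at (F (T - n)) (\<lambda>\<omega>. A \<omega> - ch t \<omega>)"
    using measurable_at_Suc[OF t(1)] t(2) by metis
  moreover have "hedge_from (T - n) (y (Suc t)) (\<lambda>\<omega>. A \<omega> - ch t \<omega>) y ch"
    using hedge_from_tail[OF _ hedge] t(1,2) by fastforce
  ultimately have "\<forall>\<omega>'\<in>Omega. (y (Suc t) \<omega>', A \<omega>' - ch t \<omega>') \<in> hedge_cone n (node (Suc t) \<omega>')"
    using Suc.IH[OF t(3)] unfolding t(2) by blast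
  with tail_meas have "(y (Suc t) \<omega>, A \<omega> - ch t \<omega>) \<in> (\<Inter>\<nu>\<in>succ_nodes F t (node t \<omega>). hedge_cone n \<nu>)"
    using mem_Inter_succ_nodes[OF t(1) _ _ Suc.prems(4)] by blast
  then show ?case
    using hedge_from_mem_step_cone[OF _ hedge Suc.prems(4)] t by (simp add: t_def)
qed

lemma hedge_from_of_mem_step_cone:
  assumes "t \<le> T" "measurable_at (F t) Y" "measurable_at (F t) A"
    and mem: "\<forall>\<omega>\<in>Omega. (Y \<omega>, A \<omega>) \<in> step_cone (C (node t \<omega>)) (Kn t (node t \<omega>)) (nodeval (xi t) (node t \<omega>))"
    and continue: "\<And>Y' A'. measurable_at (F t) Y' \<Longrightarrow> measurable_at (F t) A'
      \<Longrightarrow> \<forall>\<omega>\<in>Omega. (Y' \<omega>, A' \<omega>) \<in> C (node t \<omega>) \<Longrightarrow> \<exists>y ch. hedge_from (Suc t) Y' A' y ch"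
  shows "\<exists>y ch. hedge_from t Y A y ch"
proof -
  define P where "P \<omega> = (\<lambda>(w, b, c). (w, b) \<in> C (node t \<omega>) \<and> 0 \<le> c \<and> A \<omega> = b + c \<and>
    Y \<omega> + c *\<^sub>R nodeval (xi t) (node t \<omega>) - w \<in> Kn t (node t \<omega>))" for \<omega>
  have "measurable_at (F t) P"
    unfolding measurable_at_def
  proof (intro ballI)
    fix \<mu> \<omega> \<omega>' assume "\<mu> \<in> F t" "\<omega> \<in> \<mu>" "\<omega>' \<in> \<mu>"
    then have "node t \<omega> = node t \<omega>'" "Y \<omega> = Y \<omega>'" "A \<omega> = A \<omega>'"
      using node_eq[OF assms(1)] measurable_atD[OF assms(2)] measurable_atD[OF assms(3)] by metis+
    then show "P \<omega> = P \<omega>'"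
      by (simp add: P_def)
  qed
  moreover have "\<forall>\<omega>\<in>Omega. \<exists>x. P \<omega> x"
  proof
    fix \<omega> assume "\<omega> \<in> Omega"
    then obtain w b c where "(w, b) \<in> C (node t \<omega>)" "0 \<le> c" "A \<omega> = b + c"
      "Y \<omega> + c *\<^sub>R nodeval (xi t) (node t \<omega>) - w \<in> Kn t (node t \<omega>)"
      using mem unfolding mem_step_cone by blast
    then show "\<exists>x. P \<omega> x"
      unfolding P_def by (intro exI[of _ "(w, b, c)"]) simp
  qed
  ultimately obtain X where X: "measurable_at (F t) X" "\<forall>\<omega>\<in>Omega. P \<omega> (X \<omega>)"
    by (rule measurable_at_choice)
  define Y' A' c where "Y' \<omega> = fst (X \<omega>)" and "A' \<omega> = fst (snd (X \<omega>))" and "c \<omega> = snd (snd (X \<omega>))"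
    for \<omega>
  have meas: "measurable_at (F t) Y'" "measurable_at (F t) A'" "measurable_at (F t) c"
    unfolding Y'_def A'_def c_def
    using measurable_at_comp[OF X(1), of fst] measurable_at_comp[OF X(1), of "\<lambda>x. fst (snd x)"]
      measurable_at_comp[OF X(1), of "\<lambda>x. snd (snd x)"] by simp_all
  have P: "(Y' \<omega>, A' \<omega>) \<in> C (node t \<omega>) \<and> 0 \<le> c \<omega> \<and> A \<omega> = A' \<omega> + c \<omega> \<and>
      Y \<omega> + c \<omega> *\<^sub>R xi t \<omega> - Y' \<omega> \<in> Kcone rate t \<omega>" if "\<omega> \<in> Omega" for \<omega>
  proof -
    have "P \<omega> (X \<omega>)" using X(2) that by blast
    then show ?thesis
      using xi_node[OF assms(1) that] Kn_node[OF assms(1) that]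
      by (cases "X \<omega>") (simp add: P_def Y'_def A'_def c_def)
  qed
  then obtain y ch where "hedge_from (Suc t) Y' A' y ch"
    using continue[OF meas(1,2)] by blast
  then have "hedge_from t Y A (y(t := Y)) (ch(t := c))"
    using P by (intro hedge_from_cons[OF assms(1) _ meas(1,3)]) auto
  then show ?thesis by blast
qed

lemma hedge_from_of_mem_hedge_cone:
  "n \<le> T \<Longrightarrow> measurable_at (F (T - n)) Y \<Longrightarrow> measurable_at (F (T - n)) A
    \<Longrightarrow> \<forall>\<omega>\<in>Omega. (Y \<omega>, A \<omega>) \<in> hedge_cone n (node (T - n) \<omega>) \<Longrightarrow> \<exists>y ch. hedge_from (T - n) Y A y ch"
proof (induction n arbitrary: Y A)
  case 0
  have continue: "\<exists>y ch. hedge_from (Suc T) Y' A' y ch"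
    if "measurable_at (F T) Y'" "measurable_at (F T) A'" "\<forall>\<omega>\<in>Omega. (Y' \<omega>, A' \<omega>) \<in> {0}" for Y' A'
    using hedge_from_end[of Y' A'] that(3) by (auto simp: zero_prod_def)
  have "measurable_at (F T) Y" "measurable_at (F T) A"
    "\<forall>\<omega>\<in>Omega. (Y \<omega>, A \<omega>) \<in> step_cone {0} (Kn T (node T \<omega>)) (nodeval (xi T) (node T \<omega>))"
    using 0 by simp_all
  from hedge_from_of_mem_step_cone[where C = "\<lambda>_. {0}", OF order.refl this continue]
  show ?case
    by simp
next
  case (Suc n)
  define t where "t = T - Suc n"
  have t: "t < T" "Suc t = T - n" "n \<le> T"
    using Suc.prems(1) by (auto simp: t_def)
  have continue: "\<exists>y ch. hedge_from (Suc t) Y' A' y ch"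
    if meas: "measurable_at (F t) Y'" "measurable_at (F t) A'"
      and mem: "\<forall>\<omega>\<in>Omega. (Y' \<omega>, A' \<omega>) \<in> (\<Inter>\<nu>\<in>succ_nodes F t (node t \<omega>). hedge_cone n \<nu>)"
    for Y' A'
  proof -
    have "\<forall>\<omega>\<in>Omega. (Y' \<omega>, A' \<omega>) \<in> hedge_cone n (node (T - n) \<omega>)"
      using mem node_Suc[OF t(1)] t(2) by fastforce
    then show ?thesis
      using Suc.IH[OF t(3)] measurable_at_Suc[OF t(1) meas(1)] measurable_at_Suc[OF t(1) meas(2)] t(2)
      by simp
  qed
  have "measurable_at (F t) Y" "measurable_at (F t) A"
    "\<forall>\<omega>\<in>Omega. (Y \<omega>, A \<omega>) \<in> step_cone (\<Inter>\<nu>\<in>succ_nodes F t (node t \<omega>). hedge_cone n \<nu>)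
      (Kn t (node t \<omega>)) (nodeval (xi t) (node t \<omega>))"
    using Suc.prems(2-4) by (simp_all add: t_def)
  from hedge_from_of_mem_step_cone[where C = "\<lambda>\<mu>. \<Inter>\<nu>\<in>succ_nodes F t \<mu>. hedge_cone n \<nu>",
      OF less_imp_le[OF t(1)] this continue]
  show ?case
    by (simp add: t_def)
qed

lemma hedge_cone_iff_hedge_from:
  assumes "t \<le> T" "measurable_at (F t) Y" "measurable_at (F t) A"
  shows "(\<forall>\<omega>\<in>Omega. (Y \<omega>, A \<omega>) \<in> hedge_cone (T - t) (node t \<omega>)) \<longleftrightarrow> (\<exists>y ch. hedge_from t Y A y ch)"
proof -
  have "T - (T - t) = t" using assms(1) by simp
  then show ?thesis
    using hedge_from_mem_hedge_cone[of "T - t" A Y] hedge_from_of_mem_hedge_cone[of "T - t" Y A] assms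
    by (metis diff_le_self)
qed

section \<open>The construction and the bid price\<close>

lemma Qset_iff_hedge_from:
  assumes "t \<le> T"
  shows "z \<in> Qset Omega F T rate t \<longleftrightarrow> measurable_at (F t) z \<and> (\<exists>y ch. hedge_from t z (\<lambda>_. 0) y ch)"
proof
  assume "z \<in> Qset Omega F T rate t"
  then obtain y where z: "measurable_at (F t) z"
    and y: "\<forall>s\<in>{t+1..T+1}. measurable_at (F (s - 1)) (y s)" "\<forall>\<omega>\<in>Omega. y (T+1) \<omega> = 0"
      "\<forall>\<omega>\<in>Omega. z \<omega> - y (t+1) \<omega> \<in> Kcone rate t \<omega>"
      "\<forall>s\<in>{t+1..T}. \<forall>\<omega>\<in>Omega. y s \<omega> - y (s+1) \<omega> \<in> Kcone rate s \<omega>"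
    unfolding Qset_def by blast
  have "(y(t := z)) s \<omega> - (y(t := z)) (Suc s) \<omega> \<in> Kcone rate s \<omega>" if "s \<in> {t..T}" "\<omega> \<in> Omega" for s \<omega>
  proof -
    from that(1) consider "s = t" | "s \<in> {t+1..T}" by force
    then show ?thesis
      by cases (use y(3,4) that(2) in auto)
  qed
  then have "hedge_from t z (\<lambda>_. 0) (y(t := z)) (\<lambda>_ _. 0)"
    using y(1,2) \<open>t \<le> T\<close> by (simp add: hedge_from_def)
  with z show "measurable_at (F t) z \<and> (\<exists>y ch. hedge_from t z (\<lambda>_. 0) y ch)"
    by blast
next
  assume "measurable_at (F t) z \<and> (\<exists>y ch. hedge_from t z (\<lambda>_. 0) y ch)"
  then obtain y ch where z: "measurable_at (F t) z" and hedge: "hedge_from t z (\<lambda>_. 0) y ch"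
    by blast
  have h: "\<forall>\<omega>\<in>Omega. y t \<omega> = z \<omega>" "\<forall>s\<in>{Suc t..Suc T}. measurable_at (F (s - 1)) (y s)"
    "\<forall>\<omega>\<in>Omega. y (Suc T) \<omega> = 0"
    "\<forall>s\<in>{t..T}. \<forall>\<omega>\<in>Omega. y s \<omega> + ch s \<omega> *\<^sub>R xi s \<omega> - y (Suc s) \<omega> \<in> Kcone rate s \<omega>"
    using hedge unfolding hedge_from_def by auto
  have step: "y s \<omega> - y (Suc s) \<omega> \<in> Kcone rate s \<omega>" if "s \<in> {t..T}" "\<omega> \<in> Omega" for s \<omega>
    using bspec[OF bspec[OF h(4) that(1)] that(2)] hedge_from_zero_mass[OF hedge that(2,1)] by simp
  have "\<forall>\<omega>\<in>Omega. z \<omega> - y (t + 1) \<omega> \<in> Kcone rate t \<omega>"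
    using step[of t] h(1) \<open>t \<le> T\<close> by simp
  moreover have "\<forall>s\<in>{t + 1..T}. \<forall>\<omega>\<in>Omega. y s \<omega> - y (s + 1) \<omega> \<in> Kcone rate s \<omega>"
    using step by simp
  ultimately show "z \<in> Qset Omega F T rate t"
    unfolding Qset_def using z h(2,3) by (intro CollectI conjI exI[where x = y]) simp_all
qed

lemma Qnode_eq:
  assumes t: "t \<le> T" and \<mu>: "\<mu> \<in> F t"
  shows "Qnode Omega F T rate t \<mu> = {q. (q, 0) \<in> hedge_cone (T - t) \<mu>}"
proof (intro set_eqI iffI)
  fix q assume "q \<in> Qnode Omega F T rate t \<mu>"
  then obtain z where "z \<in> Qset Omega F T rate t" and zq: "\<forall>\<omega>\<in>\<mu>. z \<omega> = q"
    unfolding Qnode_def by blast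
  then have "\<forall>\<omega>\<in>Omega. (z \<omega>, 0) \<in> hedge_cone (T - t) (node t \<omega>)"
    using hedge_cone_iff_hedge_from[OF t, of z "\<lambda>_. 0"] Qset_iff_hedge_from[OF t] by auto
  moreover obtain \<omega> where "\<omega> \<in> \<mu>"
    using node_nonempty[OF t \<mu>] by auto
  ultimately have "(z \<omega>, 0) \<in> hedge_cone (T - t) (node t \<omega>)"
    using node_subset[OF t \<mu>] by auto
  with \<open>\<omega> \<in> \<mu>\<close> show "q \<in> {q. (q, 0) \<in> hedge_cone (T - t) \<mu>}"
    using zq node_eq[OF t \<mu>] by simp
next
  fix q assume "q \<in> {q. (q, 0) \<in> hedge_cone (T - t) \<mu>}"
  define z where "z \<omega> = (if \<omega> \<in> \<mu> then q else 0)" for \<omega>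
  have "measurable_at (F t) z"
    unfolding measurable_at_def z_def using node_unique[OF t \<mu>] by metis
  moreover have "(z \<omega>, 0) \<in> hedge_cone (T - t) (node t \<omega>)" if "\<omega> \<in> Omega" for \<omega>
  proof (cases "\<omega> \<in> \<mu>")
    case True
    with \<open>q \<in> _\<close> show ?thesis by (simp add: z_def node_eq[OF t \<mu>])
  next
    case False
    have "convex_cone (hedge_cone (T - t) (node t \<omega>))"
      using convex_cone_hedge_cone node_mem[OF t that] t by simp
    with False show ?thesis
      by (simp add: z_def convex_cone_contains_0 flip: zero_prod_def)
  qed
  ultimately have "z \<in> Qset Omega F T rate t"
    using hedge_cone_iff_hedge_from[OF t, of z "\<lambda>_. 0"] Qset_iff_hedge_from[OF t] by auto
  then show "q \<in> Qnode Omega F T rate t \<mu>"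
    unfolding Qnode_def by (intro CollectI bexI[OF _ \<open>z \<in> Qset Omega F T rate t\<close>]) (simp add: z_def)
qed

lemma init_eq:
  assumes "measurable_at (F 0) (y 0)" "\<omega> \<in> Omega"
  shows "y 0 \<omega> = init Omega y"
proof -
  have "(SOME \<omega>. \<omega> \<in> Omega) \<in> Omega"
    using assms(2) by (rule someI)
  then show ?thesis
    unfolding init_def using measurable_atD[OF assms(1), of Omega \<omega>] F0 assms(2) by simp
qed

lemma Phi_bg_iff_hedge_from:
  "(y, ch) \<in> Phi_bg Omega F T rate xi \<longleftrightarrow> hedge_from 0 (\<lambda>_. init Omega y) (\<lambda>_. 1) y ch"
proof
  assume "(y, ch) \<in> Phi_bg Omega F T rate xi"
  then have y: "measurable_at (F 0) (y 0)" "\<forall>t\<in>{1..T+1}. measurable_at (F (t - 1)) (y t)"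
      "\<forall>\<omega>\<in>Omega. y (T+1) \<omega> = 0"
    and ch: "\<forall>t\<le>T. measurable_at (F t) (ch t) \<and> (\<forall>\<omega>\<in>Omega. 0 \<le> ch t \<omega> \<and> ch t \<omega> \<le> 1)"
      "\<forall>\<omega>\<in>Omega. (\<Sum>t\<le>T. ch t \<omega>) = 1"
    and step: "\<forall>t\<le>T. \<forall>\<omega>\<in>Omega. y t \<omega> + ch t \<omega> *\<^sub>R xi t \<omega> - y (t+1) \<omega> \<in> Kcone rate t \<omega>"
    unfolding Phi_bg_def is_strategy_def is_mixed_stopping_time_def by auto
  show "hedge_from 0 (\<lambda>_. init Omega y) (\<lambda>_. 1) y ch"
    unfolding hedge_from_def
  proof (intro conjI)
    show "\<forall>\<omega>\<in>Omega. y 0 \<omega> = init Omega y"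
      using init_eq[of y, OF y(1)] by blast
    show "\<forall>s\<in>{Suc 0..Suc T}. measurable_at (F (s - 1)) (y s)"
      using y(2) by simp
    show "\<forall>\<omega>\<in>Omega. y (Suc T) \<omega> = 0"
      using y(3) by simp
    show "\<forall>s\<in>{0..T}. measurable_at (F s) (ch s) \<and> (\<forall>\<omega>\<in>Omega. 0 \<le> ch s \<omega>)"
      using ch(1) by simp
    show "\<forall>\<omega>\<in>Omega. (\<Sum>s=0..T. ch s \<omega>) = 1"
      using ch(2) by (simp add: atLeast0AtMost)
    show "\<forall>s\<in>{0..T}. \<forall>\<omega>\<in>Omega. y s \<omega> + ch s \<omega> *\<^sub>R xi s \<omega> - y (Suc s) \<omega> \<in> Kcone rate s \<omega>"
      using step by simp
  qed
next
  assume "hedge_from 0 (\<lambda>_. init Omega y) (\<lambda>_. 1) y ch"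
  then have h: "\<forall>\<omega>\<in>Omega. y 0 \<omega> = init Omega y" "\<forall>t\<in>{Suc 0..Suc T}. measurable_at (F (t - 1)) (y t)"
      "\<forall>\<omega>\<in>Omega. y (Suc T) \<omega> = 0" "\<forall>t\<in>{0..T}. measurable_at (F t) (ch t) \<and> (\<forall>\<omega>\<in>Omega. 0 \<le> ch t \<omega>)"
      "\<forall>\<omega>\<in>Omega. (\<Sum>t=0..T. ch t \<omega>) = 1"
      "\<forall>t\<in>{0..T}. \<forall>\<omega>\<in>Omega. y t \<omega> + ch t \<omega> *\<^sub>R xi t \<omega> - y (Suc t) \<omega> \<in> Kcone rate t \<omega>"
    unfolding hedge_from_def by auto
  have "measurable_at (F 0) (y 0)"
    by (rule measurable_at_cong[OF _ measurable_at_const h(1)]) simp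
  with h(2,3) have "is_strategy Omega F T y"
    by (simp add: is_strategy_def)
  moreover have "ch t \<omega> \<le> 1" if "t \<le> T" "\<omega> \<in> Omega" for t \<omega>
  proof -
    have "ch t \<omega> \<le> (\<Sum>s=0..T. ch s \<omega>)"
      using h(4) that by (intro member_le_sum) auto
    with h(5) that(2) show ?thesis
      by simp
  qed
  with h(4,5) have "is_mixed_stopping_time Omega F T ch"
    by (simp add: is_mixed_stopping_time_def atLeast0AtMost)
  ultimately show "(y, ch) \<in> Phi_bg Omega F T rate xi"
    using h(6) by (simp add: Phi_bg_def)
qed

lemma initial_positions_eq:
  "{x. \<exists>(y, ch)\<in>Phi_bg Omega F T rate xi. x = init Omega y} = {v. (v, 1) \<in> hedge_cone T Omega}"
proof -
  have "(v, 1) \<in> hedge_cone T Omega \<longleftrightarrow> (\<forall>\<omega>\<in>Omega. (v, 1) \<in> hedge_cone (T - 0) (node 0 \<omega>))" for v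
    using Omega_nonempty by (auto simp: node_0)
  then have cone_iff: "(v, 1) \<in> hedge_cone T Omega \<longleftrightarrow> (\<exists>y ch. hedge_from 0 (\<lambda>_. v) (\<lambda>_. 1) y ch)" for v
    using hedge_cone_iff_hedge_from[of 0 "\<lambda>_. v" "\<lambda>_. 1"] by simp
  have init: "init Omega y = v" if "hedge_from 0 (\<lambda>_. v) (\<lambda>_. 1) y ch" for v y ch
  proof -
    have "(SOME \<omega>. \<omega> \<in> Omega) \<in> Omega"
      using Omega_nonempty by (simp add: some_in_eq)
    with that show ?thesis
      by (simp add: hedge_from_def init_def)
  qed
  show ?thesis
  proof (intro set_eqI iffI)
    fix v assume "v \<in> {x. \<exists>(y, ch)\<in>Phi_bg Omega F T rate xi. x = init Omega y}"
    then obtain y ch where "(y, ch) \<in> Phi_bg Omega F T rate xi" "v = init Omega y"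
      by blast
    then have "hedge_from 0 (\<lambda>_. v) (\<lambda>_. 1) y ch"
      by (simp add: Phi_bg_iff_hedge_from)
    then show "v \<in> {v. (v, 1) \<in> hedge_cone T Omega}"
      using cone_iff by blast
  next
    fix v assume "v \<in> {v. (v, 1) \<in> hedge_cone T Omega}"
    then obtain y ch where hedge: "hedge_from 0 (\<lambda>_. v) (\<lambda>_. 1) y ch"
      using cone_iff by blast
    then have "(y, ch) \<in> Phi_bg Omega F T rate xi"
      by (simp add: Phi_bg_iff_hedge_from init[OF hedge])
    with init[OF hedge] show "v \<in> {x. \<exists>(y, ch)\<in>Phi_bg Omega F T rate xi. x = init Omega y}"
      by blast
  qed
qed

lemma Zrec_eq: "n \<le> T \<Longrightarrow> \<mu> \<in> F (T - n) \<Longrightarrow> Zrec Omega F T rate xi n \<mu> = {v. (v, 1) \<in> hedge_cone n \<mu>}"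
proof (induction n arbitrary: \<mu>)
  case 0
  have "Qnode Omega F T rate T \<mu> = Kn T \<mu>"
    using Qnode_eq[of T \<mu>] 0 by (simp add: mem_step_cone_zero)
  moreover have "v \<in> (\<lambda>q. - x + q) ` K \<longleftrightarrow> v + x \<in> K" for v x :: "real^'d" and K
  proof -
    have "v = - x + q \<longleftrightarrow> q = v + x" for q
      by (auto simp: algebra_simps)
    then show ?thesis by auto
  qed
  ultimately show ?case
    by (simp add: Unode_def mem_step_cone_zero set_eq_iff)
next
  case (Suc n)
  define t where "t = T - Suc n"
  have t: "t < T" "T - t = Suc n" "Suc t = T - n" "n \<le> T" and \<mu>: "\<mu> \<in> F t"
    using Suc.prems by (auto simp: t_def)
  define C where "C = (\<Inter>\<nu>\<in>succ_nodes F t \<mu>. hedge_cone n \<nu>)"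
  have succ: "\<nu> \<in> F (T - n)" if "\<nu> \<in> succ_nodes F t \<mu>" for \<nu>
    using that t(3) by (simp add: succ_nodes_def)
  have "convex_cone C"
    unfolding C_def using convex_cone_hedge_cone[OF t(4) succ] by (auto intro: convex_cone_Inter)
  moreover have "0 \<le> b" if "(w, b) \<in> C" for w b
  proof -
    obtain \<nu> where "\<nu> \<in> succ_nodes F t \<mu>"
      using succ_nodes_nonempty[OF t(1) \<mu>] by auto
    with that show ?thesis
      unfolding C_def using hedge_cone_nonneg[OF t(4) succ] by blast
  qed
  moreover have "convex_cone (Kn t \<mu>)"
    by (simp add: Kn_def convex_cone_Kcone)
  ultimately have hull: "convex hull ((\<lambda>q. - nodeval (xi t) \<mu> + q) ` {q. (q, 0) \<in> hedge_cone (Suc n) \<mu>} \<union>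
      {w + q | w q. (w, 1) \<in> C \<and> (q, 0) \<in> hedge_cone (Suc n) \<mu>}) = {v. (v, 1) \<in> hedge_cone (Suc n) \<mu>}"
    using convex_hull_step_cone_slices[of C "Kn t \<mu>" "nodeval (xi t) \<mu>"] by (simp add: C_def t_def)
  have Z: "Zrec Omega F T rate xi (Suc n) \<mu> = convex hull (Unode Omega F T rate xi t \<mu> \<union>
      {w + q | w q. w \<in> (\<Inter>\<nu>\<in>succ_nodes F t \<mu>. Zrec Omega F T rate xi n \<nu>) \<and> q \<in> Qnode Omega F T rate t \<mu>})"
    by (simp add: Let_def t_def)
  have W: "(\<forall>\<nu>\<in>succ_nodes F t \<mu>. w \<in> Zrec Omega F T rate xi n \<nu>) \<longleftrightarrow> (w, 1) \<in> C" for w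
    using Suc.IH[OF t(4) succ] by (auto simp: C_def)
  have Q: "Qnode Omega F T rate t \<mu> = {q. (q, 0) \<in> hedge_cone (Suc n) \<mu>}"
    using Qnode_eq[OF _ \<mu>] t by simp
  show ?case
    unfolding Z Unode_def Q using hull by (simp add: W)
qed

lemma Z0_eq: "Z0 Omega F T rate xi = {v. (v, 1) \<in> hedge_cone T Omega}"
  unfolding Z0_def using Zrec_eq[of T Omega] F0 by simp

text \<open>A deferred-solvent position \<open>-e\<^sup>j\<close> at time \<open>0\<close> would yield one free unit of asset \<open>j\<close>.\<close>
lemma neg_axis_notin_Qnode:
  assumes "no_arbitrage Omega F T rate TYPE('d)"
  shows "- axis j 1 \<notin> Qnode Omega F T rate 0 Omega"
proof
  define e where "e = axis j (1::real)"
  assume "- axis j 1 \<in> Qnode Omega F T rate 0 Omega"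
  then obtain z where "z \<in> Qset Omega F T rate 0" and z: "\<forall>\<omega>\<in>Omega. z \<omega> = - e"
    unfolding Qnode_def e_def by blast
  then obtain y where mz: "measurable_at (F 0) z"
    and y: "\<forall>s\<in>{1..T+1}. measurable_at (F (s - 1)) (y s)" "\<forall>\<omega>\<in>Omega. y (T+1) \<omega> = 0"
      "\<forall>\<omega>\<in>Omega. z \<omega> - y 1 \<omega> \<in> Kcone rate 0 \<omega>"
      "\<forall>s\<in>{1..T}. \<forall>\<omega>\<in>Omega. y s \<omega> - y (s+1) \<omega> \<in> Kcone rate s \<omega>"
    unfolding Qset_def by auto
  define w where "w s = (if s = 0 then z else y s)" for s
  have w: "w s \<omega> - w (Suc s) \<omega> \<in> Kcone rate s \<omega>" if "s \<le> T" "\<omega> \<in> Omega" for s \<omega>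
    using y(3,4) that by (cases s) (auto simp: w_def)
  define y' where "y' s = (if s \<le> T then (\<lambda>\<omega>. w s \<omega> + e) else (\<lambda>_. 0))" for s
  have "measurable_at (F (t - 1)) (y' t)" if "t \<in> {1..T+1}" for t
  proof (cases "t \<le> T")
    case True
    with that y(1) have "measurable_at (F (t - 1)) (\<lambda>\<omega>. y t \<omega> + e)"
      by (auto intro: measurable_at_comp[of _ "y t" "\<lambda>v. v + e"])
    with True that show ?thesis
      by (simp add: y'_def w_def)
  qed (simp add: y'_def)
  moreover have "measurable_at (F 0) (y' 0)"
    using measurable_at_comp[OF mz, of "\<lambda>v. v + e"] by (simp add: y'_def w_def)
  ultimately have "is_strategy Omega F T y'"
    by (simp add: is_strategy_def y'_def)
  moreover have "init Omega y' = 0"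
    using z some_in_eq[of Omega] Omega_nonempty by (simp add: init_def y'_def w_def)
  moreover have "\<forall>t<T. \<forall>\<omega>\<in>Omega. y' t \<omega> - y' (t+1) \<omega> \<in> Kcone rate t \<omega>"
    using w by (simp add: y'_def)
  moreover have "\<forall>\<omega>\<in>Omega. y' T \<omega> - e \<in> Kcone rate T \<omega>"
    using w[of T] y(2) by (simp add: y'_def w_def)
  moreover have "\<forall>\<omega>\<in>Omega. \<forall>i. 0 \<le> e $ i" "e \<noteq> 0"
    by (simp_all add: e_def axis_def vec_eq_iff)
  ultimately have "\<exists>(y :: nat \<Rightarrow> 'w \<Rightarrow> real^'d) (x :: 'w \<Rightarrow> real^'d).
     is_strategy Omega F T y \<and> init Omega y = 0 \<and>
     (\<forall>t<T. \<forall>\<omega>\<in>Omega. y t \<omega> - y (t+1) \<omega> \<in> Kcone rate t \<omega>) \<and>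
     measurable_at (F T) x \<and> (\<forall>\<omega>\<in>Omega. \<forall>i. 0 \<le> x \<omega> $ i) \<and> (\<exists>\<omega>\<in>Omega. x \<omega> \<noteq> 0) \<and>
     (\<forall>\<omega>\<in>Omega. y T \<omega> - x \<omega> \<in> Kcone rate T \<omega>)"
    using Omega_nonempty by (intro exI[where x = y'] exI[where x = "\<lambda>_. e"]) auto
  with assms show False
    unfolding no_arbitrage_def by blast
qed

lemma exercise_mem_hedge_cone:
  assumes "n \<le> T" "\<mu> \<in> F (T - n)" "v + nodeval (xi (T - n)) \<mu> \<in> Kn (T - n) \<mu>"
  shows "(v, 1) \<in> hedge_cone n \<mu>"
proof (cases n)
  case 0
  with assms(3) show ?thesis
    by (simp add: mem_step_cone_zero)
next
  case (Suc m)
  have "(0, 0) \<in> (\<Inter>\<nu>\<in>succ_nodes F (T - Suc m) \<mu>. hedge_cone m \<nu>)"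
    using Suc assms(1) convex_cone_hedge_cone[of m]
    by (auto simp: succ_nodes_def Suc_diff_Suc convex_cone_contains_0 simp flip: zero_prod_def)
  moreover have "v + nodeval (xi (T - Suc m)) \<mu> \<in> Kn (T - Suc m) \<mu>"
    using assms(3) Suc by simp
  ultimately show ?thesis
    unfolding Suc hedge_cone.simps mem_step_cone
    by (intro exI[where x = 0] exI[where x = 1]) auto
qed

lemma Z0_eq_initial_positions:
  "Z0 Omega F T rate xi = {x. \<exists>(y, ch)\<in>Phi_bg Omega F T rate xi. x = init Omega y}"
  by (simp add: Z0_eq initial_positions_eq)

lemma bid_price_eq_Sup:
  "bid_price Omega F T rate xi j = Sup {- x | x. x *\<^sub>R axis j 1 \<in> Z0 Omega F T rate xi}"
  unfolding bid_price_def Z0_eq_initial_positions by (rule arg_cong[where f = Sup]) blast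

lemma Z0_axis_slice_Sup_attained:
  fixes j :: 'd
  assumes "no_arbitrage Omega F T rate TYPE('d)"
  defines "S \<equiv> {- x | x. x *\<^sub>R axis j 1 \<in> Z0 Omega F T rate xi}"
  shows "Sup S \<in> S \<and> (\<forall>v\<in>S. v \<le> Sup S)"
proof -
  have Omega: "Omega \<in> F (T - T)"
    using F0 by simp
  obtain x\<^sub>0 where "x\<^sub>0 *\<^sub>R axis j 1 + nodeval (xi 0) Omega \<in> Kn 0 Omega"
    using Kcone_axis_absorbs[of j "nodeval (xi 0) Omega" rate 0] unfolding Kn_def by blast
  then have "(x\<^sub>0 *\<^sub>R axis j 1, 1) \<in> hedge_cone T Omega"
    using exercise_mem_hedge_cone[OF le_refl Omega] by simp
  moreover have "(- axis j 1, 0) \<notin> hedge_cone T Omega"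
    using neg_axis_notin_Qnode[OF assms(1)] Qnode_eq[of 0 Omega] F0 by simp
  ultimately show ?thesis
    using cone_slice_Sup_attained[OF finitely_generated_cone_imp_closed convex_cone_hedge_cone]
      finitely_generated_hedge_cone[OF le_refl Omega] Omega by (simp add: S_def Z0_eq)
qed

end

theorem theorem5p3:
  fixes Omega :: "'w set" and F :: "nat \<Rightarrow> 'w set set" and T :: nat
    and P :: "'w \<Rightarrow> real"
    and rate :: "nat \<Rightarrow> 'w \<Rightarrow> 'd::finite \<Rightarrow> 'd \<Rightarrow> real"
    and xi :: "nat \<Rightarrow> 'w \<Rightarrow> real^'d"
  assumes fin: "finite Omega" and ne: "Omega \<noteq> {}"
    and P_pos: "\<forall>\<omega>\<in>Omega. P \<omega> > 0" and P_sum: "(\<Sum>\<omega>\<in>Omega. P \<omega>) = 1"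
    and part: "\<forall>t\<le>T. partition_on Omega (F t)"
    and refine: "\<forall>t<T. \<forall>\<nu>\<in>F (Suc t). \<exists>\<mu>\<in>F t. \<nu> \<subseteq> \<mu>"
    and F0: "F 0 = {Omega}"
    and FT: "F T = {{\<omega>} | \<omega>. \<omega> \<in> Omega}"
    and rate_adapted: "\<forall>t\<le>T. measurable_at (F t) (rate t)"
    and rate_pos: "\<forall>t\<le>T. \<forall>\<omega>\<in>Omega. \<forall>j k. rate t \<omega> j k > 0"
    and rate_diag: "\<forall>t\<le>T. \<forall>\<omega>\<in>Omega. \<forall>j. rate t \<omega> j j = 1"
    and NA: "no_arbitrage Omega F T rate TYPE('d)"
    and xi_adapted: "\<forall>t\<le>T. measurable_at (F t) (xi t)"
  shows "Z0 Omega F T rate xi = {x. \<exists>(y, ch)\<in>Phi_bg Omega F T rate xi. x = init Omega y}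
    \<and> (\<forall>j. bid_price Omega F T rate xi j \<in> {- x | x. x *\<^sub>R axis j 1 \<in> Z0 Omega F T rate xi}
           \<and> (\<forall>v\<in>{- x | x. x *\<^sub>R axis j 1 \<in> Z0 Omega F T rate xi}. v \<le> bid_price Omega F T rate xi j))
    \<and> (\<forall>j. \<exists>(y, ch)\<in>Phi_bg Omega F T rate xi. bid_price Omega F T rate xi j *\<^sub>R axis j 1 = - init Omega y)"
proof -
  interpret option_market Omega F T rate xi
    using fin ne part refine F0 rate_adapted xi_adapted by unfold_locales
  have "\<exists>(y, ch)\<in>Phi_bg Omega F T rate xi. bid_price Omega F T rate xi j *\<^sub>R axis j 1 = - init Omega y" for j
    using Z0_axis_slice_Sup_attained[OF NA, of j] bid_price_eq_Sup[of j]
    unfolding Z0_eq_initial_positions by fastforce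
  then show ?thesis
    using Z0_eq_initial_positions Z0_axis_slice_Sup_attained[OF NA] bid_price_eq_Sup by simp
qed

end
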